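(* Let $G$ be a finite connected simple graph with shortest-path distance $d$. The following are equivalent: (1) $G$ is ptolemaic, i.e. $d(x,y)d(z,w)+d(y,z)d(x,w)\ge d(x,z)d(y,w)$ for all vertices $x,y,z,w$; (2) for all vertices $x,y,z,w$ with $y\neq z$, $d(x,y)+d(y,z)=d(x,z)$ and $d(y,z)+d(z,w)=d(y,w)$, one has $d(x,y)+d(y,z)+d(z,w)=d(x,w)$; (3) for all vertices $x,y,z,w$ with $d(x,y)+d(y,z)=d(x,z)$, $d(y,z)+d(z,w)=d(y,w)$ and $d(x,y)=d(y,z)=1$, one has $d(x,y)+d(y,z)+d(z,w)=d(x,w)$; (4) $G$ is chordal (has no induced cycle of length at least $4$) and distance-hereditary (every induced path is a shortest path). *)

theory Defs
  imports Main
begin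

definition simple_graph :: "'a set \<Rightarrow> ('a \<Rightarrow> 'a \<Rightarrow> bool) \<Rightarrow> bool" where
  "simple_graph V E \<longleftrightarrow> finite V \<and> (\<forall>x y. E x y \<longrightarrow> x \<in> V \<and> y \<in> V)
     \<and> (\<forall>x y. E x y \<longrightarrow> E y x) \<and> (\<forall>x. \<not> E x x)"

definition walk :: "'a set \<Rightarrow> ('a \<Rightarrow> 'a \<Rightarrow> bool) \<Rightarrow> 'a list \<Rightarrow> bool" where
  "walk V E p \<longleftrightarrow> p \<noteq> [] \<and> set p \<subseteq> V \<and> (\<forall>i. Suc i < length p \<longrightarrow> E (p ! i) (p ! Suc i))"

definition connected_graph :: "'a set \<Rightarrow> ('a \<Rightarrow> 'a \<Rightarrow> bool) \<Rightarrow> bool" where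
  "connected_graph V E \<longleftrightarrow> (\<forall>x\<in>V. \<forall>y\<in>V. \<exists>p. walk V E p \<and> hd p = x \<and> last p = y)"

definition gdist :: "'a set \<Rightarrow> ('a \<Rightarrow> 'a \<Rightarrow> bool) \<Rightarrow> 'a \<Rightarrow> 'a \<Rightarrow> nat" where
  "gdist V E x y = (LEAST n. \<exists>p. walk V E p \<and> hd p = x \<and> last p = y \<and> length p = Suc n)"

definition gpath :: "'a set \<Rightarrow> ('a \<Rightarrow> 'a \<Rightarrow> bool) \<Rightarrow> 'a list \<Rightarrow> bool" where
  "gpath V E p \<longleftrightarrow> walk V E p \<and> distinct p"

definition induced_path :: "'a set \<Rightarrow> ('a \<Rightarrow> 'a \<Rightarrow> bool) \<Rightarrow> 'a list \<Rightarrow> bool" where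
  "induced_path V E p \<longleftrightarrow> gpath V E p \<and>
     (\<forall>i j. i < length p \<and> j < length p \<and> Suc i < j \<longrightarrow> \<not> E (p ! i) (p ! j))"

definition shortest_path :: "'a set \<Rightarrow> ('a \<Rightarrow> 'a \<Rightarrow> bool) \<Rightarrow> 'a list \<Rightarrow> bool" where
  "shortest_path V E p \<longleftrightarrow> gpath V E p \<and> length p - 1 = gdist V E (hd p) (last p)"

definition distance_hereditary :: "'a set \<Rightarrow> ('a \<Rightarrow> 'a \<Rightarrow> bool) \<Rightarrow> bool" where
  "distance_hereditary V E \<longleftrightarrow> (\<forall>p. induced_path V E p \<longrightarrow> shortest_path V E p)"

definition induced_cycle :: "'a set \<Rightarrow> ('a \<Rightarrow> 'a \<Rightarrow> bool) \<Rightarrow> 'a list \<Rightarrow> bool" where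
  "induced_cycle V E c \<longleftrightarrow> length c \<ge> 3 \<and> distinct c \<and> set c \<subseteq> V \<and>
     (\<forall>i < length c. E (c ! i) (c ! (Suc i mod length c))) \<and>
     (\<forall>i < length c. \<forall>j < length c. E (c ! i) (c ! j) \<longrightarrow>
         j = Suc i mod length c \<or> i = Suc j mod length c)"

definition chordal :: "'a set \<Rightarrow> ('a \<Rightarrow> 'a \<Rightarrow> bool) \<Rightarrow> bool" where
  "chordal V E \<longleftrightarrow> \<not> (\<exists>c. induced_cycle V E c \<and> length c \<ge> 4)"

definition ptolemaic :: "'a set \<Rightarrow> ('a \<Rightarrow> 'a \<Rightarrow> bool) \<Rightarrow> bool" where
  "ptolemaic V E \<longleftrightarrow> (\<forall>x\<in>V. \<forall>y\<in>V. \<forall>z\<in>V. \<forall>w\<in>V.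
     gdist V E x y * gdist V E z w + gdist V E y z * gdist V E x w \<ge> gdist V E x z * gdist V E y w)"

end

theory Submission
  imports Defs
begin

text \<open>
  Ptolemy's inequality for x, y, z, w with x-y-z and y-z-w geodesic reduces to (2), and the
  equivalence of (2), (3) and chordality plus distance heredity comes from following geodesics
  and induced paths edge by edge.

  The hard part is (2) \<Rightarrow> (1), by induction on the number of vertices. Deleting a vertex t
  that is farthest from some vertex r keeps the graph connected and distances unchanged, so
  Ptolemy's inequality holds for every quadruple avoiding such a t. For a given quadruple,
  either some corner has a farthest vertex outside it, or a corner is farthest from an adjacent
  corner, or every corner is the unique farthest vertex from the opposite one; the last two
  cases are handled by moving along geodesics towards the farthest vertex, using that (2)
  forces any two neighbours of a vertex on geodesics towards a common vertex to be adjacent.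
\<close>

lemma walk_Cons_iff:
  "walk V E (a # p) \<longleftrightarrow> a \<in> V \<and> (p = [] \<or> E a (hd p) \<and> walk V E p)"
proof (cases p)
  case (Cons b q)
  have "(\<forall>i. Suc i < length (a # p) \<longrightarrow> E ((a # p) ! i) ((a # p) ! Suc i)) \<longleftrightarrow>
        E a b \<and> (\<forall>i. Suc i < length p \<longrightarrow> E (p ! i) (p ! Suc i))"
    using Cons All_less_Suc2[where P = "\<lambda>i. E ((a # p) ! i) ((a # p) ! Suc i)" and n = "length q"]
    by auto
  then show ?thesis using Cons by (auto simp: walk_def)
qed (simp add: walk_def)

lemma walk_singleton [simp]: "walk V E [a] \<longleftrightarrow> a \<in> V"
  by (simp add: walk_Cons_iff)

lemma walk_append_tl:
  "walk V E p \<Longrightarrow> walk V E q \<Longrightarrow> last p = hd q \<Longrightarrow> walk V E (p @ tl q)"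
proof (induction p)
  case (Cons a p)
  show ?case
  proof (cases "p = []")
    case True
    then show ?thesis using Cons.prems by (cases q) (auto simp: walk_Cons_iff)
  next
    case False
    then show ?thesis using Cons by (auto simp: walk_Cons_iff)
  qed
qed (simp add: walk_def)

lemma walk_rev:
  assumes "walk V E p" and "\<And>a b. E a b \<Longrightarrow> E b a"
  shows "walk V E (rev p)"
  unfolding walk_def
proof (intro conjI allI impI)
  show "rev p \<noteq> []" "set (rev p) \<subseteq> V" using assms(1) by (auto simp: walk_def)
  fix i assume i: "Suc i < length (rev p)"
  define k where "k = length p - Suc (Suc i)"
  have "E (p ! k) (p ! Suc k)" using assms(1) i unfolding walk_def k_def by auto
  moreover have "rev p ! i = p ! Suc k" "rev p ! Suc i = p ! k"
    using i by (auto simp: rev_nth k_def Suc_diff_Suc)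
  ultimately show "E (rev p ! i) (rev p ! Suc i)" using assms(2) by simp
qed

lemma walk_mono:
  "walk V' E' p \<Longrightarrow> V' \<subseteq> V \<Longrightarrow> (\<And>a b. E' a b \<Longrightarrow> E a b) \<Longrightarrow> walk V E p"
  unfolding walk_def by blast

locale connected_simple_graph =
  fixes V :: "'a set" and E :: "'a \<Rightarrow> 'a \<Rightarrow> bool"
  assumes simple: "simple_graph V E" and connected: "connected_graph V E"
begin

abbreviation d :: "'a \<Rightarrow> 'a \<Rightarrow> nat" where "d \<equiv> gdist V E"

lemma finite_V: "finite V"
  and edge_in_V: "E a b \<Longrightarrow> a \<in> V" "E a b \<Longrightarrow> b \<in> V"
  and edge_sym: "E a b \<Longrightarrow> E b a"
  and edge_irrefl: "\<not> E a a"
  using simple by (auto simp: simple_graph_def)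

lemma edge_neq: "E a b \<Longrightarrow> a \<noteq> b"
  using edge_irrefl by blast

lemma gdist_commute: "d a b = d b a"
proof -
  have rev_walk: "\<exists>p. walk V E p \<and> hd p = b \<and> last p = a \<and> length p = n"
    if "walk V E p" "hd p = a" "last p = b" "length p = n" for a b n p
    using that walk_rev[OF that(1) edge_sym] by (intro exI[of _ "rev p"]) (auto simp: hd_rev last_rev)
  have "(\<exists>p. walk V E p \<and> hd p = a \<and> last p = b \<and> length p = Suc n) \<longleftrightarrow>
        (\<exists>p. walk V E p \<and> hd p = b \<and> last p = a \<and> length p = Suc n)" for n
    using rev_walk[of _ a b] rev_walk[of _ b a] by blast
  then show ?thesis unfolding gdist_def by simp
qed

lemma gdist_le_walk:
  assumes "walk V E p" "hd p = a" "last p = b"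
  shows "d a b \<le> length p - 1"
proof -
  have "length p = Suc (length p - 1)" using assms(1) by (simp add: walk_def)
  then show ?thesis unfolding gdist_def using assms by (intro Least_le) blast
qed

lemma shortest_walk_exists:
  assumes "a \<in> V" "b \<in> V"
  obtains p where "walk V E p" "hd p = a" "last p = b" "length p = Suc (d a b)"
proof -
  obtain p where p: "walk V E p" "hd p = a" "last p = b"
    using connected assms by (auto simp: connected_graph_def)
  then have "length p = Suc (length p - 1)" by (simp add: walk_def)
  with p have "\<exists>n p. walk V E p \<and> hd p = a \<and> last p = b \<and> length p = Suc n" by blast
  then have "\<exists>p. walk V E p \<and> hd p = a \<and> last p = b \<and> length p = Suc (d a b)"
    unfolding gdist_def by (rule LeastI_ex)
  then show ?thesis using that by blast
qed

lemma gdist_self [simp]: "a \<in> V \<Longrightarrow> d a a = 0"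
  using gdist_le_walk[of "[a]" a a] by simp

lemma gdist_eq_0_iff:
  assumes "a \<in> V" "b \<in> V"
  shows "d a b = 0 \<longleftrightarrow> a = b"
proof
  assume "d a b = 0"
  moreover obtain p where "walk V E p" "hd p = a" "last p = b" "length p = Suc (d a b)"
    using shortest_walk_exists assms .
  ultimately show "a = b" by (auto simp: length_Suc_conv)
qed (use assms in simp)

lemma gdist_pos: "a \<in> V \<Longrightarrow> b \<in> V \<Longrightarrow> a \<noteq> b \<Longrightarrow> 0 < d a b"
  using gdist_eq_0_iff by blast

lemma gdist_triangle:
  assumes "a \<in> V" "b \<in> V" "c \<in> V"
  shows "d a c \<le> d a b + d b c"
proof -
  obtain p where p: "walk V E p" "hd p = a" "last p = b" "length p = Suc (d a b)"
    using shortest_walk_exists assms by blast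
  obtain q where q: "walk V E q" "hd q = b" "last q = c" "length q = Suc (d b c)"
    using shortest_walk_exists assms by blast
  have "walk V E (p @ tl q)" using walk_append_tl[OF p(1) q(1)] p(3) q(2) by simp
  moreover have "hd (p @ tl q) = a" using p by (cases p) (auto simp: walk_def)
  moreover have "last (p @ tl q) = c" using p q by (cases q) (auto simp: walk_def)
  ultimately have "d a c \<le> length (p @ tl q) - 1" by (rule gdist_le_walk)
  then show ?thesis using p q by simp
qed

lemma gdist_edge:
  assumes "E a b"
  shows "d a b = 1"
proof -
  have V: "a \<in> V" "b \<in> V" using edge_in_V assms by auto
  then have "walk V E [a, b]" using assms by (simp add: walk_Cons_iff)
  then have "d a b \<le> 1" using gdist_le_walk[of "[a, b]" a b] by simp
  moreover have "0 < d a b" using gdist_pos V edge_neq assms by blast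
  ultimately show ?thesis by simp
qed

lemma gdist_eq_1_iff:
  assumes "a \<in> V" "b \<in> V"
  shows "d a b = 1 \<longleftrightarrow> E a b"
proof
  assume "d a b = 1"
  moreover obtain p where "walk V E p" "hd p = a" "last p = b" "length p = Suc (d a b)"
    using shortest_walk_exists assms .
  ultimately show "E a b" by (auto simp: length_Suc_conv walk_Cons_iff)
qed (rule gdist_edge)

lemma gdist_neighbour_le:
  assumes "E a n" "b \<in> V"
  shows "d a b \<le> Suc (d n b)"
  using gdist_triangle[of a n b] gdist_edge[OF assms(1)] edge_in_V[OF assms(1)] assms(2) by simp

lemma gdist_Suc_neighbour:
  assumes "a \<in> V" "b \<in> V" "d a b = Suc k"
  obtains n where "E a n" "d n b = k"
proof -
  obtain p where p: "walk V E p" "hd p = a" "last p = b" "length p = Suc (d a b)"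
    using shortest_walk_exists assms(1,2) .
  then obtain q where q: "p = a # q" "q \<noteq> []" by (cases p) (auto simp: assms(3) length_Suc_conv)
  then have n: "E a (hd q)" "walk V E q" using p(1) by (auto simp: walk_Cons_iff)
  have "d (hd q) b \<le> k" using gdist_le_walk[OF n(2) refl] p q assms(3) by simp
  moreover have "d a b \<le> Suc (d (hd q) b)" using gdist_neighbour_le[OF n(1) assms(2)] .
  ultimately show ?thesis using that n(1) assms(3) by simp
qed

lemma gdist_eq_2:
  assumes "a \<noteq> b" "\<not> E a b" "E a m" "E m b"
  shows "d a b = 2"
proof -
  have V: "a \<in> V" "b \<in> V" "m \<in> V" using assms edge_in_V by auto
  have "d a b \<le> 2" using gdist_triangle[OF V(1,3,2)] gdist_edge assms by simp
  moreover have "d a b \<noteq> 0" "d a b \<noteq> 1" using gdist_eq_0_iff gdist_eq_1_iff V assms by auto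
  ultimately show ?thesis by simp
qed

end

lemma induced_path_Cons:
  assumes "induced_path V E p" "v \<in> V" "v \<notin> set p" "E v (hd p)"
    and "\<And>i. 0 < i \<Longrightarrow> i < length p \<Longrightarrow> \<not> E v (p ! i)"
  shows "induced_path V E (v # p)"
proof -
  have "p \<noteq> []" using assms(1) by (simp add: induced_path_def gpath_def walk_def)
  then have "walk V E (v # p)"
    using assms(1,2,4) by (simp add: induced_path_def gpath_def walk_Cons_iff)
  moreover have "\<not> E ((v # p) ! i) ((v # p) ! j)"
    if "i < length (v # p)" "j < length (v # p)" "Suc i < j" for i j
  proof (cases i)
    case 0
    then show ?thesis using that assms(5)[of "j - 1"] by (cases j) auto
  next
    case (Suc i')
    then show ?thesis using that assms(1) unfolding induced_path_def by (cases j) auto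
  qed
  ultimately show ?thesis using assms(1,3) by (simp add: induced_path_def gpath_def)
qed

lemma induced_path_take:
  assumes "induced_path V E p" "0 < n"
  shows "induced_path V E (take n p)"
  using assms unfolding induced_path_def gpath_def walk_def
  by (auto dest: in_set_takeD simp: take_eq_Nil)

lemma induced_path_butlast_induced_cycle:
  assumes "induced_cycle V E c"
  shows "induced_path V E (butlast c)"
proof -
  define k where "k = length c"
  have c: "3 \<le> k" "distinct c" "set c \<subseteq> V"
    "\<And>i. i < k \<Longrightarrow> E (c ! i) (c ! (Suc i mod k))"
    "\<And>i j. i < k \<Longrightarrow> j < k \<Longrightarrow> E (c ! i) (c ! j) \<Longrightarrow> j = Suc i mod k \<or> i = Suc j mod k"
    using assms unfolding induced_cycle_def k_def by auto
  have nth: "butlast c ! i = c ! i" if "i < k - 1" for i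
    using that by (simp add: nth_butlast k_def)
  show ?thesis unfolding induced_path_def gpath_def walk_def
  proof (intro conjI allI impI)
    show "butlast c \<noteq> []" using c(1) k_def by (cases c) auto
    show "set (butlast c) \<subseteq> V" using c(3) in_set_butlastD by fastforce
    show "distinct (butlast c)" using c(2) by (simp add: distinct_butlast)
  next
    fix i assume "Suc i < length (butlast c)"
    then show "E (butlast c ! i) (butlast c ! Suc i)" using c(4)[of i] nth k_def by simp
  next
    fix i j assume ij: "i < length (butlast c) \<and> j < length (butlast c) \<and> Suc i < j"
    then have "Suc i mod k = Suc i" "Suc j mod k = Suc j" "i < k" "j < k" by (auto simp: k_def)
    then show "\<not> E (butlast c ! i) (butlast c ! j)"
      using c(5)[of i j] nth[of i] nth[of j] ij by (auto simp: k_def)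
  qed
qed

lemma induced_cycle_Cons_induced_path:
  assumes sym: "\<And>a b. E a b \<Longrightarrow> E b a" and irrefl: "\<And>a. \<not> E a a"
    and p: "induced_path V E p" "2 \<le> length p"
    and v: "v \<in> V" "v \<notin> set p" "E v (hd p)" "E (last p) v"
    and no_chord: "\<And>i. 0 < i \<Longrightarrow> i < length p - 1 \<Longrightarrow> \<not> E v (p ! i)"
  shows "induced_cycle V E (v # p)"
proof -
  define k where "k = length (v # p)"
  have edges: "\<And>i. Suc i < length p \<Longrightarrow> E (p ! i) (p ! Suc i)"
    and chords: "\<And>i j. j < length p \<Longrightarrow> Suc i < j \<Longrightarrow> \<not> E (p ! i) (p ! j)"
    and set_p: "set p \<subseteq> V" "distinct p"
    using p(1) unfolding induced_path_def gpath_def walk_def by auto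
  have hd_last: "hd p = p ! 0" "last p = p ! (k - 2)"
  proof -
    have "p \<noteq> []" using p(2) by auto
    then show "hd p = p ! 0" "last p = p ! (k - 2)" by (simp_all add: k_def hd_conv_nth last_conv_nth)
  qed
  have cycle_edge: "E ((v # p) ! i) ((v # p) ! (Suc i mod k))" if i: "i < k" for i
  proof -
    consider "i = 0" | "0 < i" "i < k - 1" | "i = k - 1" using i by fastforce
    then show ?thesis
    proof cases
      case 1
      moreover have "Suc 0 mod k = 1" using p(2) by (cases p) (auto simp: k_def)
      ultimately show ?thesis using v(3) hd_last by simp
    next
      case 2 then show ?thesis using edges[of "i - 1"] by (cases i) (auto simp: k_def)
    next
      case 3 then show ?thesis using v(4) hd_last p(2) by (auto simp: k_def nth_Cons')
    qed
  qed
  have only_cycle_edges: "j = Suc i mod k \<or> i = Suc j mod k"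
    if ij: "j < k" "E ((v # p) ! i) ((v # p) ! j)" "i < j" for i j
  proof (cases i)
    case 0
    consider "j = 1" | "1 < j" "j < k - 1" | "j = k - 1" using ij 0 by fastforce
    then show ?thesis
    proof cases
      case 2
      then have "0 < j - 1" "j - 1 < length p - 1" by (auto simp: k_def)
      then show ?thesis using ij 0 no_chord[of "j - 1"] by (simp add: nth_Cons')
    qed (use 0 p(2) in \<open>auto simp: k_def\<close>)
  next
    case (Suc i')
    then obtain j' where "j = Suc j'" using ij by (cases j) auto
    moreover have "j' = Suc i'" using ij Suc chords[where i = i' and j = j'] \<open>j = Suc j'\<close> by (cases "Suc i' < j'") (auto simp: k_def)
    ultimately show ?thesis using ij Suc by (simp add: k_def)
  qed
  show ?thesis unfolding induced_cycle_def
  proof (intro conjI allI impI)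
    fix i j assume "i < length (v # p)" "j < length (v # p)" "E ((v # p) ! i) ((v # p) ! j)"
    then show "j = Suc i mod length (v # p) \<or> i = Suc j mod length (v # p)"
      using only_cycle_edges[of j i] only_cycle_edges[of i j] irrefl sym
      by (cases i j rule: linorder_cases) (auto simp: k_def)
  qed (use p(2) v set_p cycle_edge in \<open>auto simp: k_def\<close>)
qed

context connected_simple_graph
begin

definition geodesic_gluing :: bool where
  "geodesic_gluing \<longleftrightarrow> (\<forall>x\<in>V. \<forall>y\<in>V. \<forall>z\<in>V. \<forall>w\<in>V.
     y \<noteq> z \<and> d x y + d y z = d x z \<and> d y z + d z w = d y w \<longrightarrow> d x y + d y z + d z w = d x w)"

definition edge_geodesic_gluing :: bool where
  "edge_geodesic_gluing \<longleftrightarrow> (\<forall>x\<in>V. \<forall>y\<in>V. \<forall>z\<in>V. \<forall>w\<in>V.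
     d x y + d y z = d x z \<and> d y z + d z w = d y w \<and> d x y = 1 \<and> d y z = 1
       \<longrightarrow> d x y + d y z + d z w = d x w)"

lemma edge_geodesic_gluingD:
  assumes edge_geodesic_gluing "E x y" "E y z" "w \<in> V" "d x z = 2" "d y w = Suc (d z w)"
  shows "d x w = Suc (Suc (d z w))"
proof -
  have V: "x \<in> V" "y \<in> V" "z \<in> V" using assms(2,3) edge_in_V by auto
  have "d x y + d y z = d x z \<and> d y z + d z w = d y w \<and> d x y = 1 \<and> d y z = 1
          \<longrightarrow> d x y + d y z + d z w = d x w"
    using assms(1,4) V unfolding edge_geodesic_gluing_def by blast
  then show ?thesis using assms(5,6) gdist_edge[OF assms(2)] gdist_edge[OF assms(3)] by simp
qed

lemma ptolemaic_imp_geodesic_gluing: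
  assumes "ptolemaic V E"
  shows geodesic_gluing
  unfolding geodesic_gluing_def
proof (intro ballI impI)
  fix x y z w assume V: "x \<in> V" "y \<in> V" "z \<in> V" "w \<in> V"
    and h: "y \<noteq> z \<and> d x y + d y z = d x z \<and> d y z + d z w = d y w"
  have "d x z * d y w \<le> d x y * d z w + d y z * d x w"
    using assms V by (auto simp: ptolemaic_def)
  also have "d x z * d y w = (d x y + d y z) * (d y z + d z w)" using h by simp
  also have "\<dots> = d x y * d z w + d y z * (d x y + d y z + d z w)" by (simp add: algebra_simps)
  finally have "d x y + d y z + d z w \<le> d x w"
    using gdist_pos[of y z] V h by simp
  moreover have "d x w \<le> d x y + d y z + d z w"
    using gdist_triangle[of x y w] gdist_triangle[of y z w] V by simp
  ultimately show "d x y + d y z + d z w = d x w" by simp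
qed

lemma geodesic_gluing_imp_edge_geodesic_gluing:
  assumes geodesic_gluing
  shows edge_geodesic_gluing
  unfolding edge_geodesic_gluing_def
proof (intro ballI impI)
  fix x y z w assume V: "x \<in> V" "y \<in> V" "z \<in> V" "w \<in> V"
    and h: "d x y + d y z = d x z \<and> d y z + d z w = d y w \<and> d x y = 1 \<and> d y z = 1"
  then have "y \<noteq> z" by auto
  with assms V h show "d x y + d y z + d z w = d x w" unfolding geodesic_gluing_def by blast
qed

text \<open>Induction on d x y: a neighbour of y one step closer to x, and a
  neighbour of y on a geodesic towards z, reduce the claim to a unit gluing.\<close>
lemma edge_geodesic_gluing_imp_geodesic_gluing:
  assumes glue: edge_geodesic_gluing
  shows geodesic_gluing
proof -
  have "\<forall>x\<in>V. \<forall>y\<in>V. \<forall>z\<in>V. \<forall>w\<in>V. d x y = n \<longrightarrow>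
          y \<noteq> z \<and> d x y + d y z = d x z \<and> d y z + d z w = d y w \<longrightarrow> d x y + d y z + d z w = d x w"
    for n
  proof (induction n)
    case 0
    then show ?case using gdist_eq_0_iff by fastforce
  next
    case (Suc k)
    show ?case
    proof (intro ballI impI)
      fix x y z w assume V: "x \<in> V" "y \<in> V" "z \<in> V" "w \<in> V" and n: "d x y = Suc k"
        and h: "y \<noteq> z \<and> d x y + d y z = d x z \<and> d y z + d z w = d y w"
      obtain x1 where x1: "E y x1" "d x1 x = k"
        using gdist_Suc_neighbour[OF V(2,1)] n gdist_commute[of x y] by auto
      obtain b where b: "d y z = Suc b" using gdist_pos[of y z] V h not0_implies_Suc by blast
      obtain z1 where z1: "E y z1" "d z1 z = b" using gdist_Suc_neighbour[OF V(2,3) b] .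
      have V1: "x1 \<in> V" "z1 \<in> V" using x1 z1 edge_in_V by auto
      have e1: "d x1 y = 1" "d y z1 = 1" "d x x1 = k"
        using gdist_edge x1 z1 edge_sym by (auto simp: gdist_commute)
      have "d x z \<le> d x x1 + d x1 z" "d x1 z \<le> Suc (d y z)"
        using gdist_triangle V V1 gdist_neighbour_le[OF edge_sym[OF x1(1)] V(3)] by auto
      then have dx1z: "d x1 z = Suc (d y z)" using h n e1 by simp
      have "d x1 z \<le> d x1 z1 + d z1 z" "d x1 z1 \<le> d x1 y + d y z1"
        using gdist_triangle V V1 by blast+
      then have dx1z1: "d x1 z1 = 2" using dx1z b z1 e1 by simp
      have "d y w \<le> d y z1 + d z1 w" "d z1 w \<le> d z1 z + d z w"
        using gdist_triangle V V1 by blast+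
      then have dz1w: "d z1 w = b + d z w" using h b z1 e1 by simp
      have "d x1 w = Suc (Suc (d z1 w))"
        using edge_geodesic_gluingD[OF glue edge_sym[OF x1(1)] z1(1) V(4) dx1z1] dz1w h b by simp
      then have "d x1 y + d y w = d x1 w" using e1 dz1w h b by simp
      moreover have "x1 \<noteq> y" "d x x1 + d x1 y = d x y" using x1 e1 n edge_neq by auto
      ultimately have "d x x1 + d x1 y + d y w = d x w" using Suc.IH V V1 e1 by blast
      then show "d x y + d y z + d z w = d x w" using e1 n h by simp
    qed
  qed
  then show ?thesis unfolding geodesic_gluing_def by blast
qed

lemma induced_path_gdist:
  assumes glue: edge_geodesic_gluing and p: "induced_path V E p"
  shows "i \<le> j \<Longrightarrow> j < length p \<Longrightarrow> d (p ! i) (p ! j) = j - i"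
proof (induction "j - i" arbitrary: i rule: less_induct)
  case less
  have dp: "distinct p"
    and pV: "\<And>k. k < length p \<Longrightarrow> p ! k \<in> V"
    and pE: "\<And>k. Suc k < length p \<Longrightarrow> E (p ! k) (p ! Suc k)"
    and chords: "\<And>i j. j < length p \<Longrightarrow> Suc i < j \<Longrightarrow> \<not> E (p ! i) (p ! j)"
    using p unfolding induced_path_def gpath_def walk_def by auto
  consider "j = i" | "j = Suc i" | "Suc (Suc i) \<le> j" using less.prems by linarith
  then show ?case
  proof cases
    case 3
    let ?a = "p ! i" and ?b = "p ! Suc i" and ?c = "p ! Suc (Suc i)"
    have ih: "d ?b (p ! j) = j - Suc i" "d ?c (p ! j) = j - Suc (Suc i)"
      using less.hyps[of "Suc i"] less.hyps[of "Suc (Suc i)"] 3 less.prems by auto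
    have "?a \<noteq> ?c" using dp 3 less.prems by (simp add: nth_eq_iff_index_eq)
    then have "d ?a ?c = 2"
      using gdist_eq_2 chords[of "Suc (Suc i)" i] pE[of i] pE[of "Suc i"] 3 less.prems by simp
    moreover have "d ?a ?b = 1" "d ?b ?c = 1" using gdist_edge pE 3 less.prems by auto
    moreover have "d ?b (p ! j) = Suc (d ?c (p ! j))" using ih 3 by simp
    ultimately have "d ?a (p ! j) = Suc (Suc (d ?c (p ! j)))"
      using edge_geodesic_gluingD[OF glue pE[of i] pE[of "Suc i"] pV] 3 less.prems by simp
    then show ?thesis using ih 3 by simp
  qed (use gdist_edge pE pV less.prems in auto)
qed

lemma edge_geodesic_gluing_imp_distance_hereditary:
  assumes edge_geodesic_gluing
  shows "distance_hereditary V E"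
  unfolding distance_hereditary_def shortest_path_def
proof (intro allI impI conjI)
  fix p assume p: "induced_path V E p"
  then show "gpath V E p" by (simp add: induced_path_def)
  have "p \<noteq> []" using p by (simp add: induced_path_def gpath_def walk_def)
  then show "length p - 1 = d (hd p) (last p)"
    using induced_path_gdist[OF assms p, of 0 "length p - 1"] by (simp add: hd_conv_nth last_conv_nth)
qed

text \<open>An induced cycle c of length k \<ge> 4 contains the induced path butlast c, so
  k - 2 = d (c!0) (c!(k-2)) \<le> 2; and for k = 4 gluing the edges c0 c1, c1 c2 would give
  d c0 c3 = 3.\<close>
lemma edge_geodesic_gluing_imp_chordal:
  assumes glue: edge_geodesic_gluing
  shows "chordal V E"
  unfolding chordal_def
proof
  assume "\<exists>c. induced_cycle V E c \<and> 4 \<le> length c"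
  then obtain c where ic: "induced_cycle V E c" and k4: "4 \<le> length c" by blast
  define k where "k = length c"
  have cV: "\<And>i. i < k \<Longrightarrow> c ! i \<in> V"
    and cE: "\<And>i. i < k \<Longrightarrow> E (c ! i) (c ! (Suc i mod k))"
    and cN: "\<And>i j. i < k \<Longrightarrow> j < k \<Longrightarrow> E (c ! i) (c ! j) \<Longrightarrow> j = Suc i mod k \<or> i = Suc j mod k"
    and dc: "distinct c"
    using ic unfolding induced_cycle_def k_def by auto
  have p: "induced_path V E (butlast c)" by (rule induced_path_butlast_induced_cycle[OF ic])
  have nth: "butlast c ! i = c ! i" if "i < k - 1" for i
    using that by (simp add: nth_butlast k_def)
  have path_gdist: "d (c ! i) (c ! j) = j - i" if "i \<le> j" "j \<le> k - 2" for i j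
    using induced_path_gdist[OF glue p, of i j] nth[of i] nth[of j] that k4 by (simp add: k_def)
  have "d (c ! 0) (c ! (k - 2)) \<le> d (c ! 0) (c ! (k - 1)) + d (c ! (k - 1)) (c ! (k - 2))"
    by (intro gdist_triangle cV) (use k4 k_def in auto)
  also have "\<dots> = 2"
  proof -
    have "Suc (k - 1) = k" "Suc (k - 2) = k - 1" using k4 k_def by auto
    then have "E (c ! (k - 2)) (c ! (k - 1))" "E (c ! (k - 1)) (c ! 0)"
      using cE[of "k - 2"] cE[of "k - 1"] k4 k_def by auto
    then show ?thesis using gdist_edge edge_sym by (simp add: gdist_commute)
  qed
  finally have "k = 4" using path_gdist[of 0 "k - 2"] k4 k_def by simp
  have c4: "E (c ! 0) (c ! 1)" "E (c ! 1) (c ! 2)" "E (c ! 2) (c ! 3)" "E (c ! 3) (c ! 0)"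
    using cE[of 0] cE[of 1] cE[of 2] cE[of 3] \<open>k = 4\<close> by simp_all (simp add: numeral_2_eq_2)
  have "\<not> E (c ! 1) (c ! 3)" using cN[of 1 3] \<open>k = 4\<close> by auto
  moreover have "c ! 1 \<noteq> c ! 3" using dc \<open>k = 4\<close> k_def by (simp add: nth_eq_iff_index_eq)
  ultimately have "d (c ! 1) (c ! 3) = 2" using gdist_eq_2 c4 by blast
  then have "d (c ! 0) (c ! 3) = Suc (Suc (d (c ! 2) (c ! 3)))"
    using edge_geodesic_gluingD[OF glue c4(1,2)] cV path_gdist[of 0 2] gdist_edge c4 \<open>k = 4\<close>
    by simp
  then show False using gdist_edge c4 edge_sym by (simp add: gdist_commute)
qed

end

context connected_simple_graph
begin

lemma walk_nth_in_V: "walk V E g \<Longrightarrow> i < length g \<Longrightarrow> g ! i \<in> V"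
  unfolding walk_def using nth_mem by blast

lemma walk_gdist_nth_le:
  assumes "walk V E g" "i \<le> j" "j < length g"
  shows "d (g ! i) (g ! j) \<le> j - i"
  using assms(2,3)
proof (induction j)
  case (Suc j)
  show ?case
  proof (cases "i = Suc j")
    case False
    then have "d (g ! i) (g ! j) \<le> j - i" using Suc by simp
    moreover have "d (g ! i) (g ! Suc j) \<le> d (g ! i) (g ! j) + d (g ! j) (g ! Suc j)"
      using gdist_triangle walk_nth_in_V[OF assms(1)] Suc.prems by simp
    moreover have "d (g ! j) (g ! Suc j) = 1"
      using gdist_edge assms(1) Suc.prems unfolding walk_def by simp
    ultimately show ?thesis using False Suc.prems by simp
  qed (use walk_nth_in_V[OF assms(1)] Suc.prems in simp)
qed (use walk_nth_in_V[OF assms(1)] in simp)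

lemma shortest_walk_gdist_nth:
  assumes g: "walk V E g" "length g = Suc (d (hd g) (last g))" and ij: "i \<le> j" "j < length g"
  shows "d (g ! i) (g ! j) = j - i"
proof -
  define n where "n = length g - 1"
  have ends: "hd g = g ! 0" "last g = g ! n" "g ! 0 \<in> V" "g ! n \<in> V"
    using g walk_nth_in_V[OF g(1)] by (auto simp: n_def hd_conv_nth last_conv_nth walk_def)
  have "n = d (g ! 0) (g ! n)" using g(2) ends by (simp add: n_def)
  also have "\<dots> \<le> d (g ! 0) (g ! i) + d (g ! i) (g ! j) + d (g ! j) (g ! n)"
    using gdist_triangle[of "g ! 0" "g ! i" "g ! n"] gdist_triangle[of "g ! i" "g ! j" "g ! n"]
      walk_nth_in_V[OF g(1)] ij ends by (simp add: n_def)
  also have "\<dots> \<le> i + d (g ! i) (g ! j) + (n - j)"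
  proof -
    have "n < length g" "j \<le> n" using ij by (auto simp: n_def)
    then show ?thesis
      using walk_gdist_nth_le[OF g(1), of 0 i] walk_gdist_nth_le[OF g(1), of j n] ij by simp
  qed
  finally show ?thesis using walk_gdist_nth_le[OF g(1) ij] ij by (simp add: n_def)
qed

lemma shortest_walk_induced_path:
  assumes g: "walk V E g" "length g = Suc (d (hd g) (last g))"
  shows "induced_path V E g"
  unfolding induced_path_def gpath_def
proof (intro conjI allI impI)
  show "distinct g" unfolding distinct_conv_nth
  proof (intro allI impI)
    fix i j assume ij: "i < length g" "j < length g" "i \<noteq> j"
    show "g ! i \<noteq> g ! j"
      using shortest_walk_gdist_nth[OF g, of i j] shortest_walk_gdist_nth[OF g, of j i]
        walk_nth_in_V[OF g(1)] ij by (cases "i \<le> j") auto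
  qed
  fix i j assume "i < length g \<and> j < length g \<and> Suc i < j"
  then show "\<not> E (g ! i) (g ! j)" using shortest_walk_gdist_nth[OF g, of i j] gdist_edge by auto
qed (rule g(1))

text \<open>For a geodesic g from z to w, the walk y g is again a geodesic. If x has no
  neighbour on g, then x y g is an induced path, hence a geodesic; otherwise x closes an induced
  cycle of length at least 4 with y and the part of g up to its first neighbour of x.\<close>
lemma chordal_distance_hereditary_imp_edge_geodesic_gluing:
  assumes chordal: "chordal V E" and dh: "distance_hereditary V E"
  shows edge_geodesic_gluing
  unfolding edge_geodesic_gluing_def
proof (intro ballI impI)
  fix x y z w assume V: "x \<in> V" "y \<in> V" "z \<in> V" "w \<in> V"
    and h: "d x y + d y z = d x z \<and> d y z + d z w = d y w \<and> d x y = 1 \<and> d y z = 1"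
  have xy: "E x y" and yz: "E y z" using gdist_eq_1_iff V h by auto
  obtain g where g: "walk V E g" "hd g = z" "last g = w" "length g = Suc (d z w)"
    using shortest_walk_exists[OF V(3,4)] .
  have "g \<noteq> []" using g(4) by auto
  define P where "P = y # g"
  have P: "walk V E P" "length P = Suc (d (hd P) (last P))" "P ! 0 = y" "P ! 1 = z"
    using g yz h V(2) \<open>g \<noteq> []\<close> by (auto simp: P_def walk_Cons_iff hd_conv_nth)
  have P_ip: "induced_path V E P" using shortest_walk_induced_path[OF P(1,2)] .
  have x_notin: "x \<notin> set P"
  proof
    assume "x \<in> set P"
    then obtain i where i: "i < length P" "x = P ! i" by (auto simp: in_set_conv_nth)
    then have "i = 1" using shortest_walk_gdist_nth[OF P(1,2), of 0 i] P(3) h by (simp add: gdist_commute)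
    then show False using i P(4) h V(3) by auto
  qed
  show "d x y + d y z + d z w = d x w"
  proof (cases "\<exists>i. 0 < i \<and> i < length P \<and> E x (P ! i)")
    case False
    then have "\<not> E x (P ! i)" if "0 < i" "i < length P" for i using that by blast
    then have "induced_path V E (x # P)"
      using induced_path_Cons[OF P_ip V(1) x_notin] xy by (simp add: P_def)
    then have "length (x # P) - 1 = d (hd (x # P)) (last (x # P))"
      using dh unfolding distance_hereditary_def shortest_path_def by blast
    then show ?thesis using h g(3,4) \<open>g \<noteq> []\<close> by (simp add: P_def)
  next
    case True
    define i0 where "i0 = (LEAST i. 0 < i \<and> i < length P \<and> E x (P ! i))"
    have i0: "0 < i0" "i0 < length P" "E x (P ! i0)"
      using LeastI_ex[OF True] unfolding i0_def by auto
    have before_i0: "\<not> E x (P ! i)" if "0 < i" "i < i0" for i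
      using not_less_Least[of i "\<lambda>i. 0 < i \<and> i < length P \<and> E x (P ! i)"] that i0
      unfolding i0_def by auto
    have "i0 \<noteq> 1" using i0(3) P(4) gdist_edge h by fastforce
    define C where "C = take (Suc i0) P"
    have C: "length C = Suc i0" "hd C = y" "last C = P ! i0"
      using i0 by (auto simp: C_def P_def last_conv_nth)
    have C_nth: "C ! i = P ! i" if "i < length C" for i using that by (simp add: C_def)
    have "induced_cycle V E (x # C)"
    proof (rule induced_cycle_Cons_induced_path[OF edge_sym edge_irrefl])
      show "induced_path V E C" unfolding C_def by (rule induced_path_take[OF P_ip]) simp
      show "x \<notin> set C" using x_notin unfolding C_def by (auto dest: in_set_takeD)
    qed (use C C_nth i0 before_i0 xy edge_sym V(1) in auto)
    moreover have "4 \<le> length (x # C)" using C(1) i0(1) \<open>i0 \<noteq> 1\<close> by simp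
    ultimately show ?thesis using chordal unfolding chordal_def by blast
  qed
qed

end

context connected_simple_graph
begin

definition ptolemy_ineq :: "'a \<Rightarrow> 'a \<Rightarrow> 'a \<Rightarrow> 'a \<Rightarrow> bool" where
  "ptolemy_ineq x y z w \<longleftrightarrow> d x z * d y w \<le> d x y * d z w + d y z * d x w"

lemma ptolemy_ineq_rotate: "ptolemy_ineq x y z w \<longleftrightarrow> ptolemy_ineq y z w x"
  unfolding ptolemy_ineq_def by (metis gdist_commute add.commute mult.commute)

lemma ptolemy_ineq_reflect: "ptolemy_ineq x y z w \<longleftrightarrow> ptolemy_ineq x w z y"
  unfolding ptolemy_ineq_def by (metis gdist_commute add.commute mult.commute)

lemma ptolemy_ineq_symmetric:
  "ptolemy_ineq y z w x \<longleftrightarrow> ptolemy_ineq x y z w" "ptolemy_ineq z w x y \<longleftrightarrow> ptolemy_ineq x y z w"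
  "ptolemy_ineq w x y z \<longleftrightarrow> ptolemy_ineq x y z w" "ptolemy_ineq x w z y \<longleftrightarrow> ptolemy_ineq x y z w"
  "ptolemy_ineq w z y x \<longleftrightarrow> ptolemy_ineq x y z w" "ptolemy_ineq z y x w \<longleftrightarrow> ptolemy_ineq x y z w"
  "ptolemy_ineq y x w z \<longleftrightarrow> ptolemy_ineq x y z w"
  using ptolemy_ineq_rotate[of x y z w] ptolemy_ineq_rotate[of y z w x] ptolemy_ineq_rotate[of z w x y]
    ptolemy_ineq_reflect[of x y z w] ptolemy_ineq_reflect[of w x y z] ptolemy_ineq_reflect[of z w x y]
    ptolemy_ineq_reflect[of y z w x]
  by blast+

lemma ptolemy_ineq_degenerate:
  assumes V: "x \<in> V" "y \<in> V" "z \<in> V" "w \<in> V"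
    and degenerate: "\<not> distinct [x, y, z, w] \<or> d x z \<le> 1 \<or> d y w \<le> 1"
  shows "ptolemy_ineq x y z w"
proof (cases "distinct [x, y, z, w]")
  case True
  then have pos: "1 \<le> d x y" "1 \<le> d y z" "1 \<le> d z w" "1 \<le> d x w" "1 \<le> d x z" "1 \<le> d y w"
    using gdist_pos V by (auto simp: Suc_le_eq)
  have tri: "d y w \<le> d x y + d x w" "d x z \<le> d x y + d y z"
    using gdist_triangle[of y x w] gdist_triangle[of x y z] V by (simp_all add: gdist_commute)
  have m: "d x y \<le> d x y * d z w" "d x w \<le> d y z * d x w" "d y z \<le> d y z * d x w"
    using pos by simp_all
  consider "d x z = 1" | "d y w = 1" using degenerate True pos by fastforce
  then show ?thesis
  proof cases
    case 1
    then have "d x z * d y w = d y w" by simp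
    then show ?thesis unfolding ptolemy_ineq_def using tri(1) m(1,2) by linarith
  next
    case 2
    then have "d x z * d y w = d x z" by simp
    then show ?thesis unfolding ptolemy_ineq_def using tri(2) m(1,3) by linarith
  qed
qed (use V in \<open>auto simp: ptolemy_ineq_def gdist_commute mult.commute\<close>)

definition farthest :: "'a \<Rightarrow> 'a \<Rightarrow> bool" where
  "farthest r v \<longleftrightarrow> v \<in> V \<and> (\<forall>s\<in>V. d r s \<le> d r v)"

lemma farthest_exists:
  assumes "r \<in> V"
  obtains t where "farthest r t"
proof -
  have fin: "finite (d r ` V)" using finite_V by simp
  obtain t where t: "t \<in> V" "d r t = Max (d r ` V)" using Max_in[OF fin] assms by fastforce
  moreover have "\<forall>s\<in>V. d r s \<le> d r t" using t Max_ge[OF fin] by auto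
  ultimately show ?thesis using that unfolding farthest_def by blast
qed

definition unique_farthest :: "'a \<Rightarrow> 'a \<Rightarrow> bool" where
  "unique_farthest r t \<longleftrightarrow> farthest r t \<and> (\<forall>u. farthest r u \<longrightarrow> u = t)"

lemma gdist_less_unique_farthest:
  assumes "unique_farthest r t" "s \<in> V" "s \<noteq> t"
  shows "d r s < d r t"
  using assms unfolding unique_farthest_def farthest_def by (metis le_neq_implies_less)

abbreviation edges_without :: "'a \<Rightarrow> 'a \<Rightarrow> 'a \<Rightarrow> bool" where
  "edges_without t u v \<equiv> E u v \<and> u \<noteq> t \<and> v \<noteq> t"

definition closer_neighbour :: "'a \<Rightarrow> 'a \<Rightarrow> 'a \<Rightarrow> bool" where
  "closer_neighbour r v n \<longleftrightarrow> E v n \<and> Suc (d r n) = d r v"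

lemma closer_neighbour_exists:
  assumes "r \<in> V" "v \<in> V" "v \<noteq> r"
  obtains n where "closer_neighbour r v n"
proof -
  obtain k where k: "d v r = Suc k" using gdist_pos[OF assms(2,1)] assms(3) not0_implies_Suc by blast
  obtain n where "E v n" "d n r = k" using gdist_Suc_neighbour[OF assms(2,1) k] .
  then show ?thesis using that k by (auto simp: closer_neighbour_def gdist_commute)
qed

lemma closer_neighbour_in_V: "closer_neighbour r v n \<Longrightarrow> v \<in> V \<and> n \<in> V"
  unfolding closer_neighbour_def using edge_in_V by blast

lemma neighbour_of_closer_neighbour_level:
  assumes "closer_neighbour y z n" "E z m" "E n m" "\<not> closer_neighbour y z m" "y \<in> V"
  shows "d y m = d y z"
proof -
  have "d y m \<le> Suc (d y n)"
    using gdist_neighbour_le[OF edge_sym[OF assms(3)] assms(5)] by (simp add: gdist_commute)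
  moreover have "d y z \<le> Suc (d y m)"
    using gdist_neighbour_le[OF assms(2,5)] by (simp add: gdist_commute)
  ultimately show ?thesis using assms(1,2,4) by (auto simp: closer_neighbour_def)
qed

lemma ptolemy_ineq_from_closer_neighbour:
  assumes V: "x \<in> V" "y \<in> V" "w \<in> V"
    and n: "closer_neighbour y z n" and Q: "ptolemy_ineq x y n w"
    and le: "d x n \<le> d x z" "d x z \<le> Suc (d x n)" "d n w \<le> d z w"
    and tight: "d x n = d x z \<or> Suc (d n w) = d z w"
  shows "ptolemy_ineq x y z w"
proof -
  have Qn: "d x n * d y w \<le> d x y * d n w + d y n * d x w"
    using Q by (simp add: ptolemy_ineq_def)
  have yn: "d y z = Suc (d y n)" using n by (simp add: closer_neighbour_def)
  from tight show ?thesis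
  proof
    assume "d x n = d x z"
    then have "d x z * d y w \<le> d x y * d n w + d y n * d x w" using Qn by simp
    moreover have "d x y * d n w \<le> d x y * d z w" using le(3) by (rule mult_le_mono2)
    moreover have "d y n * d x w \<le> d y z * d x w" using yn by (intro mult_le_mono1) simp
    ultimately show ?thesis unfolding ptolemy_ineq_def by linarith
  next
    assume h: "Suc (d n w) = d z w"
    have "d y w \<le> d x y + d x w" using gdist_triangle[of y x w] V by (simp add: gdist_commute)
    moreover have "d x z * d y w \<le> d x n * d y w + d y w" using mult_le_mono1[OF le(2), of "d y w"] by simp
    moreover have "d x y * d z w = d x y * d n w + d x y" using h by (metis mult_Suc_right add.commute)
    moreover have "d y z * d x w = d y n * d x w + d x w" using yn by simp
    ultimately show ?thesis using Qn unfolding ptolemy_ineq_def by linarith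
  qed
qed

text \<open>This is what the induction on the number of vertices provides: deleting a vertex t
  that is farthest from some other vertex r preserves distances between the remaining vertices.\<close>
definition ptolemaic_avoiding_farthest :: bool where
  "ptolemaic_avoiding_farthest \<longleftrightarrow> (\<forall>r t. r \<in> V \<longrightarrow> farthest r t \<longrightarrow>
     (\<forall>x\<in>V - {t}. \<forall>y\<in>V - {t}. \<forall>z\<in>V - {t}. \<forall>w\<in>V - {t}. ptolemy_ineq x y z w))"

end

locale geodesic_gluing_graph = connected_simple_graph +
  assumes geodesic_gluing: geodesic_gluing
begin

lemma gluing:
  "x \<in> V \<Longrightarrow> y \<in> V \<Longrightarrow> z \<in> V \<Longrightarrow> w \<in> V \<Longrightarrow> y \<noteq> z \<Longrightarrow> d x y + d y z = d x z \<Longrightarrow>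
    d y z + d z w = d y w \<Longrightarrow> d x y + d y z + d z w = d x w"
  using geodesic_gluing unfolding geodesic_gluing_def by blast

lemma closer_neighbours_adjacent:
  assumes "closer_neighbour r v n1" "closer_neighbour r v n2" "n1 \<noteq> n2" "r \<in> V"
  shows "E n1 n2"
proof (rule ccontr)
  assume ne: "\<not> E n1 n2"
  have V: "v \<in> V" "n1 \<in> V" "n2 \<in> V" using assms closer_neighbour_in_V by auto
  have e: "E v n1" "E v n2" "Suc (d r n1) = d r v" "Suc (d r n2) = d r v"
    using assms by (auto simp: closer_neighbour_def)
  have "d n1 n2 = 2" using gdist_eq_2[OF assms(3) ne edge_sym[OF e(1)] e(2)] .
  moreover have o: "d n1 v = 1" "d v n2 = 1" using gdist_edge e edge_sym by auto
  moreover have "n1 \<noteq> v" using edge_neq e by auto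
  ultimately have "d r n1 + d n1 v + d v n2 = d r n2"
    using gluing[OF assms(4) V(2) V(1) V(3)] e by simp
  then show False using e o by simp
qed

lemma closer_neighbour_adjacent_level:
  assumes "E u v" "d r u = d r v" "closer_neighbour r u n" "r \<in> V"
  shows "E n v"
proof (rule ccontr)
  assume ne: "\<not> E n v"
  have e: "E u n" "Suc (d r n) = d r u" using assms by (auto simp: closer_neighbour_def)
  have V: "u \<in> V" "v \<in> V" "n \<in> V" using assms e edge_in_V(1) edge_in_V(2) by auto
  have nv: "n \<noteq> v" using e assms(2) by auto
  have "d n v = 2" using gdist_eq_2[OF nv ne edge_sym[OF e(1)] assms(1)] .
  moreover have o: "d n u = 1" "d u v = 1" using gdist_edge e assms edge_sym by auto
  moreover have "n \<noteq> u" using edge_neq e by auto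
  ultimately have "d r n + d n u + d u v = d r v"
    using gluing[OF assms(4) V(3) V(1) V(2)] e by simp
  then show False using e assms(2) o by simp
qed

lemma nonadjacent_closer_neighbours_geodesic:
  assumes "closer_neighbour u v n1" "closer_neighbour w v n2" "n1 \<noteq> n2" "\<not> E n1 n2"
    and "u \<in> V" "w \<in> V"
  shows "d u w = d u v + d v w"
proof -
  have e: "E v n1" "E v n2" "Suc (d u n1) = d u v" "Suc (d w n2) = d w v"
    using assms by (auto simp: closer_neighbour_def)
  have V: "v \<in> V" "n1 \<in> V" "n2 \<in> V" using assms closer_neighbour_in_V by auto
  have "d n1 n2 = 2" using gdist_eq_2[OF assms(3,4) edge_sym[OF e(1)] e(2)] .
  moreover have "d n1 v = 1" "d v n2 = 1" using gdist_edge e edge_sym by auto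
  moreover have "n1 \<noteq> v" using edge_neq e by auto
  ultimately have 1: "d u n1 + d n1 v + d v n2 = d u n2"
    using gluing[OF assms(5) V(2) V(1) V(3)] e by simp
  have "v \<noteq> n2" using edge_neq e by auto
  moreover have "d u v + d v n2 = d u n2" using 1 e \<open>d n1 v = 1\<close> \<open>d v n2 = 1\<close> by simp
  moreover have "d v n2 + d n2 w = d v w" using e \<open>d v n2 = 1\<close> by (simp add: gdist_commute)
  ultimately have "d u v + d v n2 + d n2 w = d u w" using gluing[OF assms(5) V(1) V(3) assms(6)] by blast
  then show ?thesis using e \<open>d v n2 = 1\<close> by (simp add: gdist_commute)
qed

lemma closer_neighbour_on_geodesic:
  assumes "x \<in> V" "z \<in> V" "d x v + d v z = d x z" "closer_neighbour z v u"
  shows "d x u + d u z = d x z" "d x u = Suc (d x v)"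
proof -
  have e: "E v u" "Suc (d z u) = d z v" using assms by (auto simp: closer_neighbour_def)
  have V: "v \<in> V" "u \<in> V" using e edge_in_V(1) edge_in_V(2) by auto
  have "d x u \<le> Suc (d x v)" using gdist_neighbour_le[OF edge_sym[OF e(1)] assms(1)] by (simp add: gdist_commute)
  moreover have "d x z \<le> d x u + d u z" using gdist_triangle assms V by blast
  ultimately show "d x u = Suc (d x v)" "d x u + d u z = d x z" using assms(3) e
    by (simp_all add: gdist_commute[of z])
qed

lemma geodesic_level_adjacent:
  assumes "x \<in> V" "z \<in> V" "v \<in> V" "v' \<in> V" "d x v + d v z = d x z" "d x v' + d v' z = d x z"
    "d x v = d x v'"
  shows "v = v' \<or> E v v'"
  using assms
proof (induction "d v z" arbitrary: v v' rule: less_induct)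
  case less
  show ?case
  proof (cases "v = z")
    case True
    then have "d v' z = 0" using less.prems gdist_self by simp
    then show ?thesis using gdist_eq_0_iff less.prems True by blast
  next
    case False
    have "v' \<noteq> z"
    proof
      assume "v' = z"
      then have "d v z = 0" using less.prems gdist_self by simp
      then show False using gdist_eq_0_iff less.prems False by blast
    qed
    obtain u where u: "closer_neighbour z v u" using closer_neighbour_exists less.prems False by blast
    obtain u' where u': "closer_neighbour z v' u'"
      using closer_neighbour_exists less.prems \<open>v' \<noteq> z\<close> by blast
    have uu: "d x u + d u z = d x z" "d x u = Suc (d x v)" using closer_neighbour_on_geodesic[OF less.prems(1,2,5) u] by auto
    have uu': "d x u' + d u' z = d x z" "d x u' = Suc (d x v')"
      using closer_neighbour_on_geodesic[OF less.prems(1,2,6) u'] by auto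
    have Vu: "u \<in> V" "u' \<in> V" using u u' closer_neighbour_in_V by auto
    have lt: "d u z < d v z" using u by (auto simp: closer_neighbour_def gdist_commute)
    have "u = u' \<or> E u u'" using less.hyps[OF lt less.prems(1,2) Vu uu(1) uu'(1)] uu uu' less.prems(7) by simp
    have pu: "closer_neighbour x u v" using u uu by (auto simp: closer_neighbour_def intro: edge_sym)
    have pu': "closer_neighbour x u' v'" using u' uu' by (auto simp: closer_neighbour_def intro: edge_sym)
    show ?thesis
    proof (cases "v = v'")
      case True then show ?thesis by simp
    next
      case ne: False
      from \<open>u = u' \<or> E u u'\<close> show ?thesis
      proof
        assume "u = u'"
        then show ?thesis using closer_neighbours_adjacent[OF pu _ ne less.prems(1)] pu' by simp
      next
        assume "E u u'"
        then have "E v u'" using closer_neighbour_adjacent_level[OF _ _ pu less.prems(1)] uu uu' less.prems(7) by simp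
        then have "closer_neighbour x u' v" using uu uu' less.prems(7) by (auto simp: closer_neighbour_def intro: edge_sym)
        then show ?thesis using closer_neighbours_adjacent[OF _ pu' ne less.prems(1)] by simp
      qed
    qed
  qed
qed

lemma geodesic_gdist_le:
  assumes "x \<in> V" "z \<in> V" "v \<in> V" "m \<in> V" "d x v + d v z = d x z" "d x m + d m z = d x z"
    "d x v < d x m"
  shows "d v m \<le> d x m - d x v"
  using assms
proof (induction "d x m" arbitrary: m rule: less_induct)
  case less
  have vz: "v \<noteq> z"
  proof
    assume "v = z"
    then have "d x m \<le> d x v" using less.prems gdist_self by simp
    then show False using less.prems by simp
  qed
  show ?case
  proof (cases "Suc (d x v) = d x m")
    case True
    obtain u where u: "closer_neighbour z v u" using closer_neighbour_exists less.prems vz by blast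
    have uu: "d x u + d u z = d x z" "d x u = Suc (d x v)" using closer_neighbour_on_geodesic[OF less.prems(1,2,5) u] by auto
    have Vu: "u \<in> V" using u closer_neighbour_in_V by auto
    have "u = m \<or> E u m"
      using geodesic_level_adjacent[OF less.prems(1,2) Vu less.prems(4) uu(1) less.prems(6)] uu True
      by simp
    have pu: "closer_neighbour x u v" using u uu by (auto simp: closer_neighbour_def intro: edge_sym)
    have "E v m"
      using \<open>u = m \<or> E u m\<close>
    proof
      assume "u = m" then show ?thesis using u by (auto simp: closer_neighbour_def)
    next
      assume "E u m" then show ?thesis using closer_neighbour_adjacent_level[OF _ _ pu less.prems(1)] uu True by simp
    qed
    then show ?thesis using gdist_edge True by simp
  next
    case False
    have mx: "m \<noteq> x" using less.prems by auto
    obtain m' where m': "closer_neighbour x m m'" using closer_neighbour_exists less.prems mx by blast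
    have e: "E m m'" "Suc (d x m') = d x m" using m' by (auto simp: closer_neighbour_def)
    have Vm': "m' \<in> V" using e edge_in_V(2) by auto
    have "d m' z \<le> Suc (d m z)" using gdist_neighbour_le[OF edge_sym[OF e(1)] less.prems(2)] .
    moreover have "d x z \<le> d x m' + d m' z" using gdist_triangle less.prems Vm' by blast
    ultimately have i: "d x m' + d m' z = d x z" using less.prems(6) e by simp
    have lt: "d x m' < d x m" "d x v < d x m'" using e False less.prems(7) by auto
    have "d v m' \<le> d x m' - d x v" using less.hyps[OF lt(1) less.prems(1,2,3) Vm' less.prems(5) i lt(2)] .
    moreover have "d v m \<le> Suc (d v m')" using gdist_neighbour_le[OF e(1) less.prems(3)] by (simp add: gdist_commute)
    ultimately show ?thesis using e lt by simp
  qed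
qed

text \<open>The neighbours n and m of z are adjacent, since otherwise gluing would make y z w a
  geodesic through n.\<close>
lemma closer_neighbour_level_exchange:
  assumes n: "closer_neighbour y z n" and m: "closer_neighbour w z m" and nw: "d n w = d z w"
    and "\<not> closer_neighbour y z m" "y \<in> V" "w \<in> V"
  shows "d y m = d y z"
proof -
  have en: "E z n" "Suc (d y n) = d y z" using n by (auto simp: closer_neighbour_def)
  have em: "E z m" "Suc (d w m) = d w z" using m by (auto simp: closer_neighbour_def)
  have "E n m"
  proof (rule ccontr)
    assume "\<not> E n m"
    moreover have "m \<noteq> n" using em nw by (auto simp: gdist_commute)
    ultimately have "d y w = d y z + d z w"
      using nonadjacent_closer_neighbours_geodesic[OF n m] assms(5,6) by blast
    moreover have "d y w \<le> d y n + d n w" using gdist_triangle assms(5,6) edge_in_V(2)[OF en(1)] by blast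
    ultimately show False using en nw by simp
  qed
  then show ?thesis using neighbour_of_closer_neighbour_level[OF n em(1)] assms(4,5) by blast
qed

lemma closer_neighbour_of_farthest_le:
  assumes "farthest r v" "closer_neighbour r v n" "t \<in> V" "t \<noteq> v" "r \<in> V"
  shows "d n t \<le> d v t"
proof -
  have V: "v \<in> V" "n \<in> V" using assms closer_neighbour_in_V by auto
  obtain k where k: "d v t = Suc k" using gdist_pos[OF V(1) assms(3)] assms(4) by (cases "d v t") auto
  obtain n1 where n1: "E v n1" "d n1 t = k" using gdist_Suc_neighbour[OF V(1) assms(3) k] by blast
  have n1V: "n1 \<in> V" using n1 edge_in_V(2) by auto
  have "n = n1 \<or> E n n1"
  proof (cases "n = n1")
    case False
    have "d r n1 \<le> d r v" using assms(1) n1V by (auto simp: farthest_def)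
    moreover have "d r v \<le> Suc (d r n1)" using gdist_neighbour_le[OF n1(1), of r] assms(5) by (simp add: gdist_commute)
    ultimately have "Suc (d r n1) = d r v \<or> d r n1 = d r v" by auto
    then show ?thesis
    proof
      assume "Suc (d r n1) = d r v"
      then have "closer_neighbour r v n1" using n1 by (simp add: closer_neighbour_def)
      then show ?thesis using closer_neighbours_adjacent[OF assms(2) _ False assms(5)] by blast
    next
      assume "d r n1 = d r v"
      then show ?thesis using closer_neighbour_adjacent_level[OF n1(1) _ assms(2) assms(5)] by simp
    qed
  qed simp
  then show ?thesis
  proof
    assume "n = n1" then show ?thesis using n1 k by simp
  next
    assume "E n n1" then show ?thesis using gdist_neighbour_le[OF _ assms(3)] n1 k by fastforce
  qed
qed

lemma farthest_neighbours_common_neighbour: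
  assumes "farthest r t" "r \<noteq> t" "r \<in> V" "E t a" "E t b" "a \<noteq> b" "\<not> E a b"
  shows "\<exists>s. s \<noteq> t \<and> E a s \<and> E s b"
proof -
  have tV: "t \<in> V" using assms edge_in_V(1) by auto
  have aV: "a \<in> V" "b \<in> V" using assms edge_in_V(2) by auto
  have da: "d r a \<le> d r t" "d r b \<le> d r t" using assms(1) aV by (auto simp: farthest_def)
  have da2: "d r t \<le> Suc (d r a)" "d r t \<le> Suc (d r b)"
    using gdist_neighbour_le[OF assms(4), of r] gdist_neighbour_le[OF assms(5), of r] assms(3)
    by (auto simp: gdist_commute)
  obtain s where s: "closer_neighbour r t s" using closer_neighbour_exists[OF assms(3) tV] assms(2) by auto
  have st: "s \<noteq> t" using s edge_neq by (auto simp: closer_neighbour_def)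
  show ?thesis
  proof (cases "Suc (d r a) = d r t")
    case True
    then have pa: "closer_neighbour r t a" using assms(4) by (simp add: closer_neighbour_def)
    show ?thesis
    proof (cases "Suc (d r b) = d r t")
      case True
      then have "closer_neighbour r t b" using assms(5) by (simp add: closer_neighbour_def)
      then have "E a b" using closer_neighbours_adjacent[OF pa _ assms(6) assms(3)] by blast
      then show ?thesis using assms(7) by blast
    next
      case False
      then have "d r t = d r b" using da da2 by auto
      then have "E a b" using closer_neighbour_adjacent_level[OF assms(5) _ pa assms(3)] by blast
      then show ?thesis using assms(7) by blast
    qed
  next
    case False
    then have ea: "d r t = d r a" using da da2 by auto
    show ?thesis
    proof (cases "Suc (d r b) = d r t")
      case True
      then have "closer_neighbour r t b" using assms(5) by (simp add: closer_neighbour_def)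
      then have "E b a" using closer_neighbour_adjacent_level[OF assms(4) ea] assms(3) by blast
      then show ?thesis using assms(7) edge_sym by blast
    next
      case False
      then have eb: "d r t = d r b" using da da2 by auto
      have "E s a" using closer_neighbour_adjacent_level[OF assms(4) ea s assms(3)] .
      moreover have "E s b" using closer_neighbour_adjacent_level[OF assms(5) eb s assms(3)] .
      ultimately show ?thesis using st edge_sym by blast
    qed
  qed
qed

text \<open>Follow a geodesic from a to b; whenever it would pass through t, replace t by a common
  neighbour of its two geodesic neighbours, which are non-adjacent because the geodesic does
  not shortcut.\<close>
lemma delete_farthest_walk:
  assumes t: "farthest r t" "r \<noteq> t" "r \<in> V" and a: "a \<in> V - {t}" and b: "b \<in> V - {t}"
  shows "\<exists>p. walk (V - {t}) (edges_without t) p \<and> hd p = a \<and> last p = b \<and> length p \<le> Suc (d a b)"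
  using a
proof (induction "d a b" arbitrary: a rule: less_induct)
  case less
  have step: "\<exists>p. walk (V - {t}) (edges_without t) p \<and> hd p = a \<and> last p = b \<and>
      length p \<le> Suc (d a b)"
    if hs: "E a s" "s \<in> V - {t}" "d s b < d a b" for s
  proof -
    obtain p where p: "walk (V - {t}) (edges_without t) p" "hd p = s" "last p = b"
      "length p \<le> Suc (d s b)"
      using less.hyps hs(2,3) by blast
    have "p \<noteq> []" using p by (simp add: walk_def)
    then have "walk (V - {t}) (edges_without t) (a # p)"
      using p(1,2) hs(1,2) less.prems by (simp add: walk_Cons_iff)
    then show ?thesis using p \<open>p \<noteq> []\<close> hs(3) by (intro exI[of _ "a # p"]) auto
  qed
  show ?case
  proof (cases "a = b")
    case True
    then show ?thesis using less.prems by (intro exI[of _ "[a]"]) (simp add: walk_def)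
  next
    case False
    have V: "a \<in> V" "b \<in> V" using less.prems b by auto
    obtain k where k: "d a b = Suc k" using gdist_pos[OF V False] not0_implies_Suc by blast
    obtain n where n: "E a n" "d n b = k" using gdist_Suc_neighbour[OF V k] .
    show ?thesis
    proof (cases "n = t")
      case False
      then show ?thesis using step[OF n(1)] n(2) k edge_in_V(2)[OF n(1)] by simp
    next
      case True
      have tV: "t \<in> V" using t by (simp add: farthest_def)
      obtain k' where k': "d t b = Suc k'" using gdist_pos[OF tV V(2)] b not0_implies_Suc by blast
      obtain n2 where n2: "E t n2" "d n2 b = k'" using gdist_Suc_neighbour[OF tV V(2) k'] .
      have "\<not> E a n2"
      proof
        assume "E a n2"
        then have "d a b \<le> Suc (d n2 b)" using gdist_neighbour_le V(2) by blast
        then show False using k k' n n2 True by simp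
      qed
      moreover have "a \<noteq> n2" using k k' n n2 True by auto
      ultimately obtain s where s: "s \<noteq> t" "E a s" "E s n2"
        using farthest_neighbours_common_neighbour[OF t _ n2(1)] n(1) True edge_sym by blast
      have "d s b < d a b" using gdist_neighbour_le[OF s(3) V(2)] n2 k k' n True by simp
      then show ?thesis using step[OF s(2)] s(1) edge_in_V(2)[OF s(2)] by simp
    qed
  qed
qed

lemma delete_farthest_connected:
  assumes "farthest r t" "r \<noteq> t" "r \<in> V"
  shows "connected_simple_graph (V - {t}) (edges_without t)"
proof
  show "simple_graph (V - {t}) (edges_without t)"
    using simple by (auto simp: simple_graph_def)
  show "connected_graph (V - {t}) (edges_without t)"
    unfolding connected_graph_def using delete_farthest_walk[OF assms] by blast
qed

lemma delete_farthest_gdist: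
  assumes t: "farthest r t" "r \<noteq> t" "r \<in> V" and ab: "a \<in> V - {t}" "b \<in> V - {t}"
  shows "gdist (V - {t}) (edges_without t) a b = d a b"
proof -
  interpret G: connected_simple_graph "V - {t}" "edges_without t"
    using delete_farthest_connected[OF t] .
  obtain p where p: "walk (V - {t}) (edges_without t) p" "hd p = a" "last p = b"
    "length p \<le> Suc (d a b)"
    using delete_farthest_walk[OF t ab] by blast
  obtain q where q: "walk (V - {t}) (edges_without t) q" "hd q = a" "last q = b"
    "length q = Suc (G.d a b)"
    using G.shortest_walk_exists ab .
  have "G.d a b \<le> d a b" using G.gdist_le_walk[OF p(1-3)] p(4) by simp
  moreover have "walk V E q" using walk_mono[OF q(1)] by blast
  then have "d a b \<le> G.d a b" using gdist_le_walk q(2-4) by fastforce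
  ultimately show ?thesis by simp
qed

lemma delete_farthest_gluing:
  assumes t: "farthest r t" "r \<noteq> t" "r \<in> V"
  shows "geodesic_gluing_graph (V - {t}) (edges_without t)"
proof -
  interpret G: connected_simple_graph "V - {t}" "edges_without t"
    using delete_farthest_connected[OF t] .
  show ?thesis
  proof unfold_locales
    show G.geodesic_gluing unfolding G.geodesic_gluing_def
    proof (intro ballI impI)
      fix x y z w assume V: "x \<in> V - {t}" "y \<in> V - {t}" "z \<in> V - {t}" "w \<in> V - {t}"
        and h: "y \<noteq> z \<and> G.d x y + G.d y z = G.d x z \<and> G.d y z + G.d z w = G.d y w"
      have eq: "G.d a b = d a b" if "a \<in> V - {t}" "b \<in> V - {t}" for a b
        using delete_farthest_gdist[OF t that] .
      show "G.d x y + G.d y z + G.d z w = G.d x w"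
        using h V gluing[of x y z w] by (simp add: eq)
    qed
  qed
qed

lemma ptolemaic_avoiding_farthestD:
  assumes ptolemaic_avoiding_farthest "r \<in> V" "farthest r t"
    and "x \<in> V - {t}" "y \<in> V - {t}" "z \<in> V - {t}" "w \<in> V - {t}"
  shows "ptolemy_ineq x y z w"
  using assms unfolding ptolemaic_avoiding_farthest_def by blast

text \<open>Either d x z \<le> d x w, which makes the inequality trivial, or a neighbour g of w towards x
  is another farthest vertex from y outside the quadruple, unless g = x.\<close>
lemma ptolemy_ineq_farthest_consecutive_edge:
  assumes IH: ptolemaic_avoiding_farthest and V: "x \<in> V" "y \<in> V" "z \<in> V" "w \<in> V"
    and dist: "x \<noteq> y" "x \<noteq> z" "x \<noteq> w" "y \<noteq> z" "y \<noteq> w" "z \<noteq> w"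
    and fz: "farthest y z" and zw: "E z w" and level: "d y w = d y z"
    and n0: "closer_neighbour y z n0" "Suc (d x n0) = d x z"
  shows "ptolemy_ineq x y z w"
proof (cases "d x z \<le> d x w")
  case True
  then have "d x z * d y w \<le> d y z * d x w"
    using mult_le_mono1[OF True, of "d y z"] level by (simp add: mult.commute)
  then show ?thesis unfolding ptolemy_ineq_def by linarith
next
  case False
  have c1: "d z w = 1" using zw gdist_edge by simp
  have en0: "E z n0" "Suc (d y n0) = d y z" using n0 by (auto simp: closer_neighbour_def)
  have pe: "d x z = Suc (d x w)"
    using False gdist_triangle[of x w z] V c1 by (simp add: gdist_commute)
  have "closer_neighbour x z n0" "closer_neighbour x z w"
    using en0 n0(2) zw pe by (simp_all add: closer_neighbour_def)
  moreover have "n0 \<noteq> w" using en0 level by auto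
  ultimately have En0w: "E n0 w" using closer_neighbours_adjacent V(1) by blast
  obtain g where g: "closer_neighbour x w g" using closer_neighbour_exists[OF V(1,4)] dist by auto
  have eg: "E w g" "Suc (d x g) = d x w" using g by (auto simp: closer_neighbour_def)
  have gV: "g \<in> V" using eg edge_in_V(2) by auto
  have Egn0: "E g n0"
    using closer_neighbour_adjacent_level[OF edge_sym[OF En0w] _ g V(1)] n0(2) pe by simp
  have nEgz: "\<not> E g z"
  proof
    assume "E g z"
    then have "d x z \<le> Suc (d x g)" using gdist_neighbour_le[OF edge_sym, OF _ V(1)] gdist_commute by metis
    then show False using eg pe by simp
  qed
  have "\<not> closer_neighbour y w g"
    using closer_neighbour_adjacent_level[OF edge_sym[OF zw] _ _ V(2)] level nEgz by auto
  moreover have "closer_neighbour y w n0"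
    using En0w en0 level edge_sym by (simp add: closer_neighbour_def)
  ultimately have dyg: "d y g = d y z"
    using neighbour_of_closer_neighbour_level[OF _ eg(1) edge_sym[OF Egn0] _ V(2)] level by simp
  show ?thesis
  proof (cases "g = x")
    case False
    have "farthest y g" using fz gV dyg by (simp add: farthest_def)
    moreover have "g \<noteq> y" "g \<noteq> z" "g \<noteq> w"
      using dyg V dist eg pe edge_neq gdist_eq_0_iff by auto
    ultimately show ?thesis using ptolemaic_avoiding_farthestD[OF IH V(2)] V False by auto
  next
    case True
    then have "d x y = d y z" using dyg by (simp add: gdist_commute)
    then show ?thesis using c1 pe level by (simp add: ptolemy_ineq_def mult.commute)
  qed
qed

text \<open>Since z is farthest from y, every neighbour n of z towards y is no farther from x
  and w than z, and the inequality for x y n w (which avoids z) transfers to x y z w unless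
  both distances drop by one. In that remaining case a neighbour m of z towards w is
  adjacent to n, hence also farthest from y.\<close>
lemma ptolemy_ineq_farthest_consecutive:
  assumes IH: ptolemaic_avoiding_farthest and V: "x \<in> V" "y \<in> V" "z \<in> V" "w \<in> V"
    and dist: "x \<noteq> y" "x \<noteq> z" "x \<noteq> w" "y \<noteq> z" "y \<noteq> w" "z \<noteq> w"
    and p2: "2 \<le> d x z" and fz: "farthest y z"
  shows "ptolemy_ineq x y z w"
proof -
  have bounds: "d x n \<le> d x z \<and> d x z \<le> Suc (d x n) \<and> d n w \<le> d z w \<and> d z w \<le> Suc (d n w)"
    if n: "closer_neighbour y z n" for n
  proof -
    have "E z n" using n by (simp add: closer_neighbour_def)
    then show ?thesis
      using closer_neighbour_of_farthest_le[OF fz n, of x] closer_neighbour_of_farthest_le[OF fz n, of w]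
        gdist_neighbour_le[of z n x] gdist_neighbour_le[of z n w] V dist
      by (auto simp: gdist_commute)
  qed
  show ?thesis
  proof (cases "\<exists>n. closer_neighbour y z n \<and> (d x n = d x z \<or> Suc (d n w) = d z w)")
    case True
    then obtain n where n: "closer_neighbour y z n" "d x n = d x z \<or> Suc (d n w) = d z w"
      by blast
    have "n \<in> V" "n \<noteq> z" using n closer_neighbour_in_V edge_neq by (auto simp: closer_neighbour_def)
    then have "ptolemy_ineq x y n w" using ptolemaic_avoiding_farthestD[OF IH V(2) fz] V dist by auto
    then show ?thesis
      using ptolemy_ineq_from_closer_neighbour[OF V(1,2,4) n(1)] bounds[OF n(1)] n(2) by blast
  next
    case False
    obtain n0 where n0: "closer_neighbour y z n0" using closer_neighbour_exists[OF V(2,3)] dist by auto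
    have n0f: "Suc (d x n0) = d x z" "d n0 w = d z w"
      using bounds[OF n0] False n0 by (auto simp: le_Suc_eq)
    obtain m where m: "closer_neighbour w z m" using closer_neighbour_exists[OF V(4,3)] dist by auto
    have em: "E z m" using m by (simp add: closer_neighbour_def)
    have mV: "m \<in> V" using em edge_in_V(2) by auto
    have "\<not> closer_neighbour y z m" using False m by (auto simp: closer_neighbour_def gdist_commute)
    then have dym: "d y m = d y z" using closer_neighbour_level_exchange[OF n0 m n0f(2)] V by blast
    have "m \<noteq> x"
    proof
      assume "m = x"
      then have "d x z = 1" using gdist_edge[OF edge_sym[OF em(1)]] by simp
      then show False using p2 by simp
    qed
    show ?thesis
    proof (cases "m = w")
      case False
      have "farthest y m" using fz mV dym by (simp add: farthest_def)
      moreover have "m \<noteq> y" "m \<noteq> z" using dym V dist em edge_neq gdist_eq_0_iff by auto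
      ultimately show ?thesis using ptolemaic_avoiding_farthestD[OF IH V(2)] V False \<open>m \<noteq> x\<close> by auto
    next
      case True
      then show ?thesis
        using ptolemy_ineq_farthest_consecutive_edge[OF IH V dist fz _ _ n0 n0f(1)] em dym by simp
    qed
  qed
qed

lemma ptolemy_ineq_farthest_side:
  assumes IH: ptolemaic_avoiding_farthest and V: "x \<in> V" "y \<in> V" "z \<in> V" "w \<in> V"
    and nondegenerate: "distinct [x, y, z, w]" "2 \<le> d x z" "2 \<le> d y w"
    and farthest_side: "farthest y z \<or> farthest z y \<or> farthest x y \<or> farthest y x \<or>
      farthest z w \<or> farthest w z \<or> farthest w x \<or> farthest x w"
  shows "ptolemy_ineq x y z w"
proof -
  have dist: "x \<noteq> y" "x \<noteq> z" "x \<noteq> w" "y \<noteq> z" "y \<noteq> w" "z \<noteq> w"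
    and diag: "2 \<le> d z x" "2 \<le> d w y"
    using nondegenerate by (auto simp: gdist_commute)
  note side = ptolemy_ineq_farthest_consecutive[OF IH]
  from farthest_side show ?thesis
  proof (elim disjE)
    assume "farthest y z" then show ?thesis by (rule side[OF V dist nondegenerate(2)])
  next
    assume h: "farthest z y"
    have "ptolemy_ineq w z y x"
      by (rule side[OF V(4,3,2,1)]) (use dist diag h in auto)
    then show ?thesis using ptolemy_ineq_symmetric(5) by blast
  next
    assume h: "farthest x y"
    have "ptolemy_ineq w x y z"
      by (rule side[OF V(4,1,2,3)]) (use dist diag h in auto)
    then show ?thesis using ptolemy_ineq_symmetric(3) by blast
  next
    assume h: "farthest y x"
    have "ptolemy_ineq z y x w"
      by (rule side[OF V(3,2,1,4)]) (use dist diag h in auto)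
    then show ?thesis using ptolemy_ineq_symmetric(6) by blast
  next
    assume h: "farthest z w"
    have "ptolemy_ineq y z w x"
      by (rule side[OF V(2,3,4,1)]) (use dist nondegenerate h in auto)
    then show ?thesis using ptolemy_ineq_symmetric(1) by blast
  next
    assume h: "farthest w z"
    have "ptolemy_ineq x w z y"
      by (rule side[OF V(1,4,3,2)]) (use dist nondegenerate h in auto)
    then show ?thesis using ptolemy_ineq_symmetric(4) by blast
  next
    assume h: "farthest w x"
    have "ptolemy_ineq z w x y"
      by (rule side[OF V(3,4,1,2)]) (use dist diag h in auto)
    then show ?thesis using ptolemy_ineq_symmetric(2) by blast
  next
    assume h: "farthest x w"
    have "ptolemy_ineq y x w z"
      by (rule side[OF V(2,1,4,3)]) (use dist nondegenerate h in auto)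
    then show ?thesis using ptolemy_ineq_symmetric(7) by blast
  qed
qed

lemma unique_farthest_closer_neighbour:
  assumes uz: "unique_farthest x z" and x: "x \<in> V" "x \<noteq> z"
    and m: "closer_neighbour u z m" and u: "u \<in> V" "d x u < d x z"
  shows "closer_neighbour x z m"
proof (rule ccontr)
  assume np: "\<not> closer_neighbour x z m"
  have em: "E z m" using m by (simp add: closer_neighbour_def)
  have fz: "farthest x z" using uz by (simp add: unique_farthest_def)
  have V: "z \<in> V" "m \<in> V" using fz em edge_in_V(2) by (auto simp: farthest_def)
  obtain n where n: "closer_neighbour x z n" using closer_neighbour_exists[OF x(1) V(1)] x(2) by auto
  have Enm: "E n m"
  proof (rule ccontr)
    assume "\<not> E n m"
    moreover have "n \<noteq> m" using np n by auto
    ultimately have "d x u = d x z + d z u"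
      using nonadjacent_closer_neighbours_geodesic[OF n m] x(1) u(1) by blast
    then show False using u(2) by simp
  qed
  have "d x m \<le> Suc (d x n)" using gdist_neighbour_le[OF edge_sym, OF Enm x(1)] by (simp add: gdist_commute)
  moreover have "d x z \<le> Suc (d x m)" using gdist_neighbour_le[OF em x(1)] by (simp add: gdist_commute)
  moreover have "Suc (d x n) = d x z" using n by (simp add: closer_neighbour_def)
  moreover have "Suc (d x m) \<noteq> d x z" using np em by (simp add: closer_neighbour_def)
  ultimately have "d x m = d x z" by simp
  then have "farthest x m" using fz V(2) by (simp add: farthest_def)
  then show False using uz em edge_neq unfolding unique_farthest_def by blast
qed

text \<open>Here z is the unique farthest vertex from x. Neighbours of z towards y and towards w
  are then also neighbours towards x; if one of them serves both y and w, the inequality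
  for x y n w transfers to x y z w. Otherwise two such neighbours s and t are adjacent, and the
  inequality for y s t w forces d y w to be as large as possible.\<close>
lemma unique_farthest_ptolemy_or_tight:
  assumes IH: ptolemaic_avoiding_farthest and V: "x \<in> V" "y \<in> V" "z \<in> V" "w \<in> V"
    and dist: "x \<noteq> y" "x \<noteq> z" "x \<noteq> w" "y \<noteq> z" "y \<noteq> w" "z \<noteq> w"
    and uz: "unique_farthest x z"
  shows "ptolemy_ineq x y z w \<or> (d y w + 1 = d y z + d z w \<and>
     (\<exists>s. E s z \<and> d s y + 1 = d y z \<and> d s x + 1 = d x z \<and> d s w = d z w) \<and>
     (\<exists>t. E t z \<and> d t w + 1 = d z w \<and> d t x + 1 = d x z \<and> d t y = d y z))"
proof -
  have fz: "farthest x z" using uz by (simp add: unique_farthest_def)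
  have closer: "d x y < d x z" "d x w < d x z"
    using gdist_less_unique_farthest[OF uz] V dist by auto
  note towards_x = unique_farthest_closer_neighbour[OF uz V(1) dist(2)]
  show ?thesis
  proof (cases "\<exists>n. closer_neighbour y z n \<and> closer_neighbour w z n")
    case True
    then obtain n where n: "closer_neighbour y z n" "closer_neighbour w z n" by blast
    have nx: "closer_neighbour x z n" using towards_x[OF n(1) V(2)] closer by (simp add: gdist_commute)
    have e: "E z n" "Suc (d w n) = d w z" "Suc (d x n) = d x z"
      using n nx by (auto simp: closer_neighbour_def)
    have "n \<in> V" "n \<noteq> z" using e edge_in_V(2) edge_neq by auto
    then have "ptolemy_ineq x y n w" using ptolemaic_avoiding_farthestD[OF IH V(1) fz] V dist by auto
    then have "ptolemy_ineq x y z w"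
      using ptolemy_ineq_from_closer_neighbour[OF V(1,2,4) n(1)] e by (simp add: gdist_commute)
    then show ?thesis by simp
  next
    case False
    obtain s where s: "closer_neighbour y z s" using closer_neighbour_exists[OF V(2,3)] dist by auto
    obtain t where t: "closer_neighbour w z t" using closer_neighbour_exists[OF V(4,3)] dist by auto
    have sx: "closer_neighbour x z s" using towards_x[OF s V(2)] closer by (simp add: gdist_commute)
    have tx: "closer_neighbour x z t" using towards_x[OF t V(4)] closer by (simp add: gdist_commute)
    have Est: "E s t" using closer_neighbours_adjacent[OF sx tx _ V(1)] False s t by blast
    have es: "E z s" "Suc (d y s) = d y z" "Suc (d x s) = d x z" using s sx by (auto simp: closer_neighbour_def)
    have et: "E z t" "Suc (d w t) = d w z" "Suc (d x t) = d x z" using t tx by (auto simp: closer_neighbour_def)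
    have sV: "s \<in> V" "t \<in> V" using es et edge_in_V(2) by auto
    have dsw: "d s w = d z w"
      using neighbour_of_closer_neighbour_level[OF t es(1) edge_sym[OF Est] _ V(4)] False s
      by (auto simp: gdist_commute)
    have dty: "d t y = d y z"
      using neighbour_of_closer_neighbour_level[OF s et(1) Est _ V(2)] False t
      by (auto simp: gdist_commute)
    have "s \<noteq> z" "t \<noteq> z" using es et edge_neq by auto
    then have "ptolemy_ineq y s t w" using ptolemaic_avoiding_farthestD[OF IH V(1) fz] V sV dist by auto
    then have Qs: "d y t * d s w \<le> d y s * d t w + d s t * d y w" by (simp add: ptolemy_ineq_def)
    obtain b' where b': "d y z = Suc b'" "d y s = b'" using es by (cases "d y z") auto
    obtain c' where c': "d z w = Suc c'" "d t w = c'" using et by (cases "d z w") (auto simp: gdist_commute)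
    have "Suc b' * Suc c' \<le> b' * c' + d y w"
      using Qs dsw dty gdist_edge[OF Est] b' c' by (simp add: gdist_commute)
    moreover have "d y w \<le> d y s + d s w" using gdist_triangle V sV by blast
    ultimately have "d y w + 1 = d y z + d z w" using b' c' dsw by simp
    moreover have "\<exists>s. E s z \<and> d s y + 1 = d y z \<and> d s x + 1 = d x z \<and> d s w = d z w"
      using es dsw by (intro exI[of _ s]) (auto simp: gdist_commute edge_sym)
    moreover have "\<exists>t. E t z \<and> d t w + 1 = d z w \<and> d t x + 1 = d x z \<and> d t y = d y z"
      using et dty by (intro exI[of _ t]) (auto simp: gdist_commute edge_sym)
    ultimately show ?thesis by blast
  qed
qed

text \<open>The configuration produced by four tight corners cannot occur: the witnesses v, m, g
  lie on geodesics from x to z, and the bounds on their mutual distances from the gluing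
  property contradict d y w = d x y + d y z - 1.\<close>
lemma tight_square_impossible:
  assumes V: "x \<in> V" "y \<in> V" "z \<in> V" "w \<in> V"
    and sides: "d z w = d x y" "d x w = d y z" "2 \<le> d x y" "2 \<le> d y z"
    and diag: "d x z + 1 = d x y + d y z" "d y w + 1 = d x y + d y z"
    and v: "E v y" "d v z + 1 = d y z" "d v x = d x y"
    and m: "E m w" "d m z + 1 = d x y" "d m x = d y z"
    and g: "E g w" "d g x + 1 = d y z" "d g z = d x y"
  shows False
proof -
  define a where "a = d x y"
  define b where "b = d y z"
  have VV: "v \<in> V" "m \<in> V" "g \<in> V" using v m g edge_in_V(1) by auto
  have Iv: "d x v + d v z = d x z" using v diag by (simp add: gdist_commute)
  have Im: "d x m + d m z = d x z" using m diag by (simp add: gdist_commute)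
  have Ig: "d x g + d g z = d x z" using g diag sides by (simp add: gdist_commute)
  have e1: "d y v = 1" "d m w = 1" "d g w = 1" using v m g gdist_edge edge_sym by (auto simp: gdist_commute)
  have dyw: "d y w \<le> d v m + 2"
  proof -
    have "d y w \<le> d y v + d v w" "d v w \<le> d v m + d m w" using gdist_triangle V VV by blast+
    then show ?thesis using e1 by simp
  qed
  consider "a < b" | "b < a" | "a = b" "3 \<le> a" | "a = 2" "b = 2"
    using sides by (fastforce simp: a_def b_def)
  then show False
  proof cases
    case 1
    have "d v m \<le> d x m - d x v" using geodesic_gdist_le[OF V(1,3) VV(1,2) Iv Im] 1 m v
      by (simp add: gdist_commute a_def b_def)
    then show False using dyw 1 m v diag sides by (simp add: gdist_commute a_def b_def)
  next
    case 2
    have "d m v \<le> d x v - d x m" using geodesic_gdist_le[OF V(1,3) VV(2,1) Im Iv] 2 m v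
      by (simp add: gdist_commute a_def b_def)
    then show False using dyw 2 m v diag sides by (simp add: gdist_commute a_def b_def)
  next
    case 3
    have "v = m \<or> E v m" using geodesic_level_adjacent[OF V(1,3) VV(1,2) Iv Im] m v 3
      by (simp add: gdist_commute a_def b_def)
    then have "d v m \<le> 1" using VV gdist_edge by auto
    then show False using dyw 3 diag by (simp add: a_def b_def)
  next
    case 4
    have "d g v \<le> d x v - d x g" using geodesic_gdist_le[OF V(1,3) VV(3,1) Ig Iv] g v 4
      by (simp add: gdist_commute a_def b_def)
    moreover have "g \<noteq> v" using g v 4 by (auto simp: gdist_commute a_def b_def)
    ultimately have dgv: "d g v = 1" using g v 4 gdist_pos VV
      by (fastforce simp: gdist_commute a_def b_def)
    have "d w v \<le> d w g + d g v" "d y w \<le> d y v + d v w" using gdist_triangle V VV by blast+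
    then have "d w v = 2" using dgv e1 diag 4 by (simp add: gdist_commute a_def b_def)
    then have "d w g + d g v + d v z = d w z"
      using gluing[OF V(4) VV(3) VV(1) V(3) \<open>g \<noteq> v\<close>] dgv e1 g v 4 sides
      by (simp add: gdist_commute a_def b_def)
    then show False using dgv e1 v 4 sides by (simp add: gdist_commute a_def b_def)
  qed
qed

text \<open>A counterexample would make all four corners tight, which is impossible.\<close>
lemma ptolemy_ineq_farthest_opposite:
  assumes IH: ptolemaic_avoiding_farthest and V: "x \<in> V" "y \<in> V" "z \<in> V" "w \<in> V"
    and dist: "x \<noteq> y" "x \<noteq> z" "x \<noteq> w" "y \<noteq> z" "y \<noteq> w" "z \<noteq> w"
    and u: "unique_farthest x z" "unique_farthest z x" "unique_farthest y w" "unique_farthest w y"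
  shows "ptolemy_ineq x y z w"
proof (rule ccontr)
  assume nQ: "\<not> ptolemy_ineq x y z w"
  have rot: "ptolemy_ineq w x y z \<longleftrightarrow> ptolemy_ineq x y z w"
    "ptolemy_ineq y z w x \<longleftrightarrow> ptolemy_ineq x y z w" "ptolemy_ineq z w x y \<longleftrightarrow> ptolemy_ineq x y z w"
    using ptolemy_ineq_rotate[of w x y z] ptolemy_ineq_rotate[of x y z w] ptolemy_ineq_rotate[of z w x y]
    by blast+
  note tight = unique_farthest_ptolemy_or_tight[OF IH]
  have c1: "d y w + 1 = d y z + d z w"
    using tight[OF V dist u(1)] nQ by blast
  have c2: "d x z + 1 = d x y + d y z"
    and v: "\<exists>t. E t y \<and> d t z + 1 = d y z \<and> d t w + 1 = d w y \<and> d t x = d x y"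
    using tight[OF V(4,1,2,3) _ _ _ _ _ _ u(4)] dist nQ rot by auto
  have c3: "d z x + 1 = d z w + d w x"
    and m: "\<exists>s. E s w \<and> d s z + 1 = d z w \<and> d s y + 1 = d y w \<and> d s x = d w x"
    and g: "\<exists>t. E t w \<and> d t x + 1 = d w x \<and> d t y + 1 = d y w \<and> d t z = d z w"
    using tight[OF V(2,3,4,1) _ _ _ _ _ _ u(3)] dist nQ rot by auto
  have c4: "d w y + 1 = d w x + d x y"
    using tight[OF V(3,4,1,2) _ _ _ _ _ _ u(2)] dist nQ rot by auto
  have sides: "d z w = d x y" "d x w = d y z"
    using c1 c2 c3 c4 by (simp_all add: gdist_commute)
  have "2 \<le> d x y \<and> 2 \<le> d y z"
  proof (rule ccontr)
    assume "\<not> (2 \<le> d x y \<and> 2 \<le> d y z)"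
    then have "d x y = 1 \<or> d y z = 1" using gdist_pos V dist by fastforce
    then have "ptolemy_ineq x y z w"
      using c1 c2 sides by (auto simp: ptolemy_ineq_def gdist_commute)
    then show False using nQ by simp
  qed
  then show False
    using tight_square_impossible[OF V sides] v m g c1 c2 sides
    by (auto simp: gdist_commute)
qed

text \<open>If no vertex of the quadruple has a farthest vertex outside it or on an adjacent
  corner, then each corner is the unique farthest vertex from the opposite one.\<close>
lemma ptolemy_ineq_if_ptolemaic_avoiding_farthest:
  assumes IH: ptolemaic_avoiding_farthest and V: "x \<in> V" "y \<in> V" "z \<in> V" "w \<in> V"
  shows "ptolemy_ineq x y z w"
proof (cases "distinct [x, y, z, w] \<and> 2 \<le> d x z \<and> 2 \<le> d y w")
  case False
  then show ?thesis using ptolemy_ineq_degenerate[OF V] by fastforce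
next
  case True
  then have dist: "x \<noteq> y" "x \<noteq> z" "x \<noteq> w" "y \<noteq> z" "y \<noteq> w" "z \<noteq> w" by auto
  let ?Q = "{x, y, z, w}"
  consider (outside) r t where "r \<in> ?Q" "farthest r t" "t \<notin> ?Q"
    | (side) "farthest y z \<or> farthest z y \<or> farthest x y \<or> farthest y x \<or>
        farthest z w \<or> farthest w z \<or> farthest w x \<or> farthest x w"
    | (opposite) "\<And>r t. r \<in> ?Q \<Longrightarrow> farthest r t \<Longrightarrow> t \<in> ?Q"
      "\<not> (farthest y z \<or> farthest z y \<or> farthest x y \<or> farthest y x \<or>
        farthest z w \<or> farthest w z \<or> farthest w x \<or> farthest x w)"
    by blast
  then show ?thesis
  proof cases
    case outside
    then show ?thesis using ptolemaic_avoiding_farthestD[OF IH _ outside(2)] V by auto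
  next
    case side
    then show ?thesis using ptolemy_ineq_farthest_side[OF IH V] True by blast
  next
    case opposite
    have not_self: "\<not> farthest r r" if "r \<in> ?Q" for r
    proof
      assume "farthest r r"
      then have "d r s = 0" if "s \<in> V" for s using that unfolding farthest_def by fastforce
      then show False using \<open>r \<in> ?Q\<close> V dist gdist_eq_0_iff by blast
    qed
    have u1: "t = z" if "farthest x t" for t using opposite not_self that by blast
    have u2: "t = x" if "farthest z t" for t using opposite not_self that by blast
    have u3: "t = w" if "farthest y t" for t using opposite not_self that by blast
    have u4: "t = y" if "farthest w t" for t using opposite not_self that by blast
    have unique: "unique_farthest r t" if "r \<in> V" "\<And>u. farthest r u \<Longrightarrow> u = t" for r t
    proof -
      obtain u where "farthest r u" using farthest_exists[OF \<open>r \<in> V\<close>] .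
      then show ?thesis using that unfolding unique_farthest_def by metis
    qed
    have "unique_farthest x z" "unique_farthest z x" "unique_farthest y w" "unique_farthest w y"
      using unique V u1 u2 u3 u4 by blast+
    then show ?thesis using ptolemy_ineq_farthest_opposite[OF IH V dist] by blast
  qed
qed

end

theorem geodesic_gluing_imp_ptolemaic: "geodesic_gluing_graph V E \<Longrightarrow> ptolemaic V E"
proof (induction "card V" arbitrary: V E rule: less_induct)
  case (less V E)
  interpret geodesic_gluing_graph V E by fact
  have IH: ptolemaic_avoiding_farthest unfolding ptolemaic_avoiding_farthest_def
  proof (intro allI impI ballI)
    fix r t x y z w
    assume r: "r \<in> V" "farthest r t"
      and xs: "x \<in> V - {t}" "y \<in> V - {t}" "z \<in> V - {t}" "w \<in> V - {t}"
    have "r \<noteq> t"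
    proof
      assume "r = t"
      then have "d r x = 0" using r xs by (auto simp: farthest_def)
      then show False using \<open>r = t\<close> r xs gdist_eq_0_iff by auto
    qed
    let ?E = "edges_without t"
    have tV: "t \<in> V" using r by (simp add: farthest_def)
    have "card (V - {t}) < card V" by (rule card_Diff1_less[OF finite_V tV])
    then have "ptolemaic (V - {t}) ?E"
      using less.hyps delete_farthest_gluing[OF r(2) \<open>r \<noteq> t\<close> r(1)] by blast
    then have "gdist (V - {t}) ?E x z * gdist (V - {t}) ?E y w \<le>
        gdist (V - {t}) ?E x y * gdist (V - {t}) ?E z w + gdist (V - {t}) ?E y z * gdist (V - {t}) ?E x w"
      using xs unfolding ptolemaic_def by blast
    moreover have "gdist (V - {t}) ?E a b = d a b" if "a \<in> V - {t}" "b \<in> V - {t}" for a b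
      using delete_farthest_gdist[OF r(2) \<open>r \<noteq> t\<close> r(1) that] .
    ultimately show "ptolemy_ineq x y z w" using xs by (simp add: ptolemy_ineq_def)
  qed
  show ?case unfolding ptolemaic_def
    using ptolemy_ineq_if_ptolemaic_avoiding_farthest[OF IH] by (simp add: ptolemy_ineq_def)
qed

theorem propositionB1:
  fixes V :: "'a set" and E :: "'a \<Rightarrow> 'a \<Rightarrow> bool"
  assumes "simple_graph V E" and "connected_graph V E"
  defines "d \<equiv> gdist V E"
  defines "P2 \<equiv> (\<forall>x\<in>V. \<forall>y\<in>V. \<forall>z\<in>V. \<forall>w\<in>V.
              y \<noteq> z \<and> d x y + d y z = d x z \<and> d y z + d z w = d y w
              \<longrightarrow> d x y + d y z + d z w = d x w)"
  defines "P3 \<equiv> (\<forall>x\<in>V. \<forall>y\<in>V. \<forall>z\<in>V. \<forall>w\<in>V.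
              d x y + d y z = d x z \<and> d y z + d z w = d y w \<and> d x y = 1 \<and> d y z = 1
              \<longrightarrow> d x y + d y z + d z w = d x w)"
  shows "(ptolemaic V E \<longleftrightarrow> P2) \<and> (ptolemaic V E \<longleftrightarrow> P3)
         \<and> (ptolemaic V E \<longleftrightarrow> chordal V E \<and> distance_hereditary V E)"
proof -
  interpret G: connected_simple_graph V E using assms(1,2) by unfold_locales
  have P2: "P2 \<longleftrightarrow> G.geodesic_gluing" unfolding P2_def d_def G.geodesic_gluing_def ..
  have P3: "P3 \<longleftrightarrow> G.edge_geodesic_gluing" unfolding P3_def d_def G.edge_geodesic_gluing_def ..
  have "ptolemaic V E \<longleftrightarrow> G.geodesic_gluing"
    using G.ptolemaic_imp_geodesic_gluing geodesic_gluing_imp_ptolemaic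
      geodesic_gluing_graph.intro[OF G.connected_simple_graph_axioms]
      geodesic_gluing_graph_axioms.intro by blast
  moreover have "G.geodesic_gluing \<longleftrightarrow> G.edge_geodesic_gluing"
    using G.geodesic_gluing_imp_edge_geodesic_gluing G.edge_geodesic_gluing_imp_geodesic_gluing by blast
  moreover have "G.edge_geodesic_gluing \<longleftrightarrow> chordal V E \<and> distance_hereditary V E"
    using G.edge_geodesic_gluing_imp_chordal G.edge_geodesic_gluing_imp_distance_hereditary
      G.chordal_distance_hereditary_imp_edge_geodesic_gluing by blast
  ultimately show ?thesis using P2 P3 by blast
qed

end
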